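(* Let $\epsilon\in\{-1,0,1\}$ and assume $\alpha_0>2\eta_0$ (equivalently $C_0^2<\tfrac12$ with $C_0:=(\eta_0/\alpha_0)^{1/2}$). Then there exists $C_{\mathrm{sta}}>0$, depending only on $C_0$ (hence independent of $h$, of the contrast $\kappa_{\max}/\kappa_{\min}$, and of $C_T$), such that $$a_h^{(\epsilon)}(v_h,v_h)\ge C_{\mathrm{sta}}\,|\!|\!|v_h|\!|\!|^2\qquad\forall v_h\in V_h.$$
   Context: Setting. Let $\Omega\subset\mathbb R^d$, $d\in\{2,3\}$, be a bounded polyhedral Lipschitz domain. Let $\kappa:\Omega\to\mathbb R^{d\times d}$ be symmetric with $\kappa_{\min}|\xi|^2\le\xi^\top\kappa(x)\xi\le\kappa_{\max}|\xi|^2$ for all $\xi\in\mathbb R^d$ and a.e. $x$, where $0<\kappa_{\min}\le\kappa_{\max}<\infty$. Let $\mathcal T_h$ be a conforming affine simplicial mesh of $\Omega$ from a shape-regular family, with $h_E=\operatorname{diam}E$, $h=\max_Eh_E\le1$, and assume $\kappa$ is constant on each element, $\kappa_E:=\kappa|_E$. $\mathcal F_h=\mathcal F_h^i\cup\mathcal F_h^b$ is the set of faces (edges if $d=2$), split into interior and boundary faces; $\mathcal F_E$ is the set of faces of $E$, $n_{E,F}$ the unit outward normal to $F\in\mathcal F_E$, and $\eta_0:=\max_E\#\mathcal F_E$. For an interior face $F=\partial E_1\cap\partial E_2$, a subscript $i\in\{1,2\}$ denotes the trace from $E_i$ and $n_i:=n_{E_i,F}$. $\nabla_h$ is the elementwise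 gradient; $(\cdot,\cdot)_{\mathcal T_h}:=\sum_E(\cdot,\cdot)_{L^2(E)}$, $\langle\cdot,\cdot\rangle_{\mathcal F}:=\sum_{F\in\mathcal F}\langle\cdot,\cdot\rangle_{L^2(F)}$ for a set $\mathcal F$ of faces; $H^2(\mathcal T_h)$ is the broken Sobolev space. Fix $k\ge1$: $V_h:=\{v\in L^2(\Omega):v|_E\in\mathbb P_k(E)\ \forall E\}$. Trace operators. For an interior face and a pair of weights $(\omega_1,\omega_2)$ with $\omega_1+\omega_2=1$ (boundary faces: $(1,0)$): $[\varphi]:=\varphi_1n_1+\varphi_2n_2$, $\{\varphi\}^*_\omega:=\omega_2\varphi_1+\omega_1\varphi_2$; on a boundary face $F\subset\partial E$: $[\varphi]:=\varphi|_En_{E,F}$, $\{\varphi\}^*_\omega:=\varphi|_E$. Means of vector fields are componentwise; for a vector field $\mathbf b$, $[\mathbf b]:=\mathbf b_1\cdot n_1+\mathbf b_2\cdot n_2$ (scalar) on interior faces. Penalty and coefficients. Let $C_T>0$ be such that $\|w\|_{L^2(F)}^2\le C_T^2h_E^{-1}\|w\|_{L^2(E)}^2$ for all $E$, $F\in\mathcal F_E$, $w\in\mathbb P_k(E)$. Fix $\alpha_0>0$ and set $\tau|_{E,F}:=\alpha_0C_T^2\kappa_{E,F}h_E^{-1}$ with $\kappa_{E,F}:=n_{E,F}^\top\kappa_En_{E,F}$. On an interior face with $\tau_i:=\tau|_{E_i,F}$: $\omega^\tau_i:=\tau_i/(\tau_1+\tau_2)$, $\varrho_0:=\tau_1\tau_2/(\tau_1+\tau_2)$,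 $\varrho_1:=1/(\tau_1+\tau_2)$; on a boundary face $F\subset\partial E$: $\omega^\tau:=(1,0)$, $\varrho_0:=\tau|_{E,F}$. UIP-DG method. For $u,v$ with $u|_E,v|_E\in H^2(E)$ for all $E$: $a_h^{(\epsilon)}(u,v):=(\kappa\nabla_hu,\nabla_hv)_{\mathcal T_h}+a^c_h(u,v)+\epsilon\,a^c_h(v,u)+s^{(\epsilon)}_h(u,v)$, where $a^c_h(u,v):=-\langle\{\kappa\nabla_hu\}^*_{\omega^\tau},[v]\rangle_{\mathcal F_h}$ and $s_h^{(\epsilon)}(u,v):=\langle\varrho_0[u],[v]\rangle_{\mathcal F_h}-\epsilon\langle\varrho_1[\kappa\nabla_hu],[\kappa\nabla_hv]\rangle_{\mathcal F_h^i}$. Norms. $|v|_{0,h}^2:=\sum_{F\in\mathcal F_h}\|\varrho_0^{1/2}[v]\|_{L^2(F)}^2$, $|\!|\!|v|\!|\!|^2:=\sum_E\|\kappa^{1/2}\nabla v\|_{L^2(E)}^2+|v|_{0,h}^2$. *)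

theory Defs
  imports "HOL-Analysis.Analysis"
begin

type_synonym 'n pt = "real ^ 'n"
type_synonym 'n smplx = "('n pt) set"   (* a smplx / face given by its vertex set *)
type_synonym 'n dgfun = "'n smplx \<Rightarrow> ('n pt \<Rightarrow> real)"  (* broken function: one function per element *)

definition lipschitz_domain :: "'n::finite pt set \<Rightarrow> bool" where
  "lipschitz_domain \<Omega> \<longleftrightarrow> open \<Omega> \<and> bounded \<Omega> \<and> connected \<Omega> \<and> \<Omega> \<noteq> {} \<and>
     (\<forall>x\<in>frontier \<Omega>. \<exists>r>0. \<exists>e::'n pt. \<exists>g::'n pt \<Rightarrow> real. \<exists>L. norm e = 1 \<and>
        L-lipschitz_on {y. y \<bullet> e = 0} g \<and>
        \<Omega> \<inter> ball x r = {y \<in> ball x r. y \<bullet> e < g (y - (y \<bullet> e) *\<^sub>R e)} \<and>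
        frontier \<Omega> \<inter> ball x r = {y \<in> ball x r. y \<bullet> e = g (y - (y \<bullet> e) *\<^sub>R e)})"


definition is_simplex :: "'n::finite smplx \<Rightarrow> bool" where
  "is_simplex E \<longleftrightarrow> card E = CARD('n) + 1 \<and> \<not> affine_dependent E"

definition conforming_mesh :: "'n::finite smplx set \<Rightarrow> 'n pt set \<Rightarrow> bool" where
  "conforming_mesh T \<Omega> \<longleftrightarrow> finite T \<and> T \<noteq> {} \<and> (\<forall>E\<in>T. is_simplex E) \<and>
     (\<Union>E\<in>T. convex hull E) = closure \<Omega> \<and>
     (\<forall>E1\<in>T. \<forall>E2\<in>T. E1 \<noteq> E2 \<longrightarrow> convex hull E1 \<inter> convex hull E2 = convex hull (E1 \<inter> E2))"

definition faces_of :: "'n::finite smplx \<Rightarrow> 'n smplx set" where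
  "faces_of E = {F. F \<subseteq> E \<and> card F = CARD('n)}"

definition mesh_faces :: "'n::finite smplx set \<Rightarrow> 'n smplx set" where
  "mesh_faces T = (\<Union>E\<in>T. faces_of E)"

definition adj :: "'n::finite smplx set \<Rightarrow> 'n smplx \<Rightarrow> 'n smplx set" where
  "adj T F = {E\<in>T. F \<subseteq> E}"

definition interior_faces :: "'n::finite smplx set \<Rightarrow> 'n smplx set" where
  "interior_faces T = {F\<in>mesh_faces T. card (adj T F) = 2}"

definition boundary_faces :: "'n::finite smplx set \<Rightarrow> 'n smplx set" where
  "boundary_faces T = {F\<in>mesh_faces T. card (adj T F) = 1}"

definition hE :: "'n::finite smplx \<Rightarrow> real" where
  "hE E = diameter (convex hull E)"

definition hmax :: "'n::finite smplx set \<Rightarrow> real" where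
  "hmax T = Max (hE ` T)"

definition eta0 :: "'n::finite smplx set \<Rightarrow> nat" where
  "eta0 T = Max ((\<lambda>E. card (faces_of E)) ` T)"

definition nrm :: "'n::finite smplx \<Rightarrow> 'n smplx \<Rightarrow> 'n pt" where
  "nrm E F = (SOME n. norm n = 1 \<and> (\<forall>a\<in>F. \<forall>b\<in>F. (a - b) \<bullet> n = 0) \<and>
                      (\<forall>a\<in>F. \<forall>p\<in>E - F. (p - a) \<bullet> n < 0))"

definition elem_int :: "'n::finite smplx \<Rightarrow> ('n pt \<Rightarrow> real) \<Rightarrow> real" where
  "elem_int E f = integral (convex hull E) f"

text \<open>Surface integral over the flat face F (with unit normal n): the (d-1)-dimensional
 integral of f over F equals the d-dimensional integral over the unit-height right prism
 F + [0,1] n of f composed with the orthogonal projection onto the face hyperplane.\<close>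
definition face_int :: "'n::finite smplx \<Rightarrow> 'n pt \<Rightarrow> ('n pt \<Rightarrow> real) \<Rightarrow> real" where
  "face_int F n f = (let a = (SOME a. a \<in> F) in
     integral {y + t *\<^sub>R n | y t. y \<in> convex hull F \<and> t \<in> {0..1}}
              (\<lambda>x. f (x - ((x - a) \<bullet> n) *\<^sub>R n)))"

definition fnrm :: "'n::finite smplx set \<Rightarrow> 'n smplx \<Rightarrow> 'n pt" where
  "fnrm T F = nrm (SOME E. E \<in> adj T F) F"

definition fint :: "'n::finite smplx set \<Rightarrow> 'n smplx \<Rightarrow> ('n pt \<Rightarrow> real) \<Rightarrow> real" where
  "fint T F f = face_int F (fnrm T F) f"

definition poly_deg :: "nat \<Rightarrow> ('n::finite pt \<Rightarrow> real) \<Rightarrow> bool" where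
  "poly_deg k p \<longleftrightarrow> (\<exists>c :: ('n \<Rightarrow> nat) \<Rightarrow> real. \<forall>x.
      p x = (\<Sum>\<alpha>\<in>{\<alpha>. sum \<alpha> UNIV \<le> k}. c \<alpha> * (\<Prod>i\<in>UNIV. (x $ i) ^ \<alpha> i)))"

definition grad :: "('n::finite pt \<Rightarrow> real) \<Rightarrow> 'n pt \<Rightarrow> 'n pt" where
  "grad f x = (SOME g. (f has_derivative (\<lambda>h. g \<bullet> h)) (at x))"

definition Vh :: "nat \<Rightarrow> 'n::finite smplx set \<Rightarrow> 'n dgfun set" where
  "Vh k T = {v. \<forall>E\<in>T. poly_deg k (v E)}"

type_synonym 'n coef = "'n smplx \<Rightarrow> real ^ 'n ^ 'n"

definition kEF :: "'n::finite coef \<Rightarrow> 'n smplx \<Rightarrow> 'n smplx \<Rightarrow> real" where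
  "kEF K E F = nrm E F \<bullet> (K E *v nrm E F)"

definition tau :: "real \<Rightarrow> real \<Rightarrow> 'n::finite coef \<Rightarrow> 'n smplx \<Rightarrow> 'n smplx \<Rightarrow> real" where
  "tau \<alpha>0 CT K E F = \<alpha>0 * CT\<^sup>2 * kEF K E F / hE E"

definition tauS :: "'n::finite smplx set \<Rightarrow> real \<Rightarrow> real \<Rightarrow> 'n coef \<Rightarrow> 'n smplx \<Rightarrow> real" where
  "tauS T \<alpha>0 CT K F = (\<Sum>E\<in>adj T F. tau \<alpha>0 CT K E F)"

definition rho0 :: "'n::finite smplx set \<Rightarrow> real \<Rightarrow> real \<Rightarrow> 'n coef \<Rightarrow> 'n smplx \<Rightarrow> real" where
  "rho0 T \<alpha>0 CT K F =
     (if F \<in> boundary_faces T then tau \<alpha>0 CT K (THE E. E \<in> adj T F) F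
      else (\<Prod>E\<in>adj T F. tau \<alpha>0 CT K E F) / tauS T \<alpha>0 CT K F)"

definition rho1 :: "'n::finite smplx set \<Rightarrow> real \<Rightarrow> real \<Rightarrow> 'n coef \<Rightarrow> 'n smplx \<Rightarrow> real" where
  "rho1 T \<alpha>0 CT K F = 1 / tauS T \<alpha>0 CT K F"

definition jmp :: "'n::finite smplx set \<Rightarrow> 'n dgfun \<Rightarrow> 'n smplx \<Rightarrow> 'n pt \<Rightarrow> 'n pt" where
  "jmp T v F x = (\<Sum>E\<in>adj T F. v E x *\<^sub>R nrm E F)"

definition jmpv :: "'n::finite smplx set \<Rightarrow> ('n smplx \<Rightarrow> 'n pt \<Rightarrow> 'n pt) \<Rightarrow> 'n smplx \<Rightarrow> 'n pt \<Rightarrow> real" where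
  "jmpv T b F x = (\<Sum>E\<in>adj T F. b E x \<bullet> nrm E F)"

text \<open>Weighted mean with weights omega^tau: on an interior face
 tau2/(tau1+tau2) phi1 + tau1/(tau1+tau2) phi2; on a boundary face the one-sided trace.\<close>
definition wavg :: "'n::finite smplx set \<Rightarrow> real \<Rightarrow> real \<Rightarrow> 'n coef \<Rightarrow>
     ('n smplx \<Rightarrow> 'n pt \<Rightarrow> 'n pt) \<Rightarrow> 'n smplx \<Rightarrow> 'n pt \<Rightarrow> 'n pt" where
  "wavg T \<alpha>0 CT K b F x =
     (if F \<in> boundary_faces T then b (THE E. E \<in> adj T F) x
      else (\<Sum>E\<in>adj T F. ((tauS T \<alpha>0 CT K F - tau \<alpha>0 CT K E F) / tauS T \<alpha>0 CT K F) *\<^sub>R b E x))"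

definition kgrad :: "'n::finite coef \<Rightarrow> 'n dgfun \<Rightarrow> 'n smplx \<Rightarrow> 'n pt \<Rightarrow> 'n pt" where
  "kgrad K u E x = K E *v grad (u E) x"

definition a_vol :: "'n::finite smplx set \<Rightarrow> 'n coef \<Rightarrow> 'n dgfun \<Rightarrow> 'n dgfun \<Rightarrow> real" where
  "a_vol T K u v = (\<Sum>E\<in>T. elem_int E (\<lambda>x. kgrad K u E x \<bullet> grad (v E) x))"

definition a_c :: "'n::finite smplx set \<Rightarrow> real \<Rightarrow> real \<Rightarrow> 'n coef \<Rightarrow> 'n dgfun \<Rightarrow> 'n dgfun \<Rightarrow> real" where
  "a_c T \<alpha>0 CT K u v = - (\<Sum>F\<in>mesh_faces T.
      fint T F (\<lambda>x. wavg T \<alpha>0 CT K (kgrad K u) F x \<bullet> jmp T v F x))"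

definition s_h :: "real \<Rightarrow> 'n::finite smplx set \<Rightarrow> real \<Rightarrow> real \<Rightarrow> 'n coef \<Rightarrow> 'n dgfun \<Rightarrow> 'n dgfun \<Rightarrow> real" where
  "s_h \<epsilon> T \<alpha>0 CT K u v =
     (\<Sum>F\<in>mesh_faces T. fint T F (\<lambda>x. rho0 T \<alpha>0 CT K F * (jmp T u F x \<bullet> jmp T v F x)))
     - \<epsilon> * (\<Sum>F\<in>interior_faces T. fint T F (\<lambda>x. rho1 T \<alpha>0 CT K F *
            (jmpv T (kgrad K u) F x * jmpv T (kgrad K v) F x)))"

definition a_h :: "real \<Rightarrow> 'n::finite smplx set \<Rightarrow> real \<Rightarrow> real \<Rightarrow> 'n coef \<Rightarrow> 'n dgfun \<Rightarrow> 'n dgfun \<Rightarrow> real" where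
  "a_h \<epsilon> T \<alpha>0 CT K u v = a_vol T K u v + a_c T \<alpha>0 CT K u v + \<epsilon> * a_c T \<alpha>0 CT K v u
      + s_h \<epsilon> T \<alpha>0 CT K u v"

definition seminorm0_sq :: "'n::finite smplx set \<Rightarrow> real \<Rightarrow> real \<Rightarrow> 'n coef \<Rightarrow> 'n dgfun \<Rightarrow> real" where
  "seminorm0_sq T \<alpha>0 CT K v = (\<Sum>F\<in>mesh_faces T. fint T F (\<lambda>x. rho0 T \<alpha>0 CT K F * (norm (jmp T v F x))\<^sup>2))"

text \<open>|kappa^(1/2) grad v|^2 = grad v . (kappa grad v) for symmetric positive definite kappa.\<close>
definition tnorm_sq :: "'n::finite smplx set \<Rightarrow> real \<Rightarrow> real \<Rightarrow> 'n coef \<Rightarrow> 'n dgfun \<Rightarrow> real" where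
  "tnorm_sq T \<alpha>0 CT K v = (\<Sum>E\<in>T. elem_int E (\<lambda>x. grad (v E) x \<bullet> (K E *v grad (v E) x)))
      + seminorm0_sq T \<alpha>0 CT K v"

definition coef_ok :: "'n::finite smplx set \<Rightarrow> 'n coef \<Rightarrow> real \<Rightarrow> real \<Rightarrow> bool" where
  "coef_ok T K kmin kmax \<longleftrightarrow> 0 < kmin \<and> kmin \<le> kmax \<and>
     (\<forall>E\<in>T. transpose (K E) = K E \<and>
        (\<forall>\<xi>. kmin * (norm \<xi>)\<^sup>2 \<le> \<xi> \<bullet> (K E *v \<xi>) \<and> \<xi> \<bullet> (K E *v \<xi>) \<le> kmax * (norm \<xi>)\<^sup>2))"

definition trace_const :: "nat \<Rightarrow> 'n::finite smplx set \<Rightarrow> real \<Rightarrow> bool" where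
  "trace_const k T CT \<longleftrightarrow> 0 < CT \<and>
     (\<forall>E\<in>T. \<forall>F\<in>faces_of E. \<forall>w. poly_deg k w \<longrightarrow>
        face_int F (nrm E F) (\<lambda>x. (w x)\<^sup>2) \<le> CT\<^sup>2 / hE E * elem_int E (\<lambda>x. (w x)\<^sup>2))"

end

theory Submission
  imports Defs
begin

(* Write a_h(v,v) as the broken energy plus, on every face F, the integral of
     -(1 + eps) {kappa grad v}_omega . [v] + rho0 |[v]|^2 - eps rho1 [kappa grad v]^2.
   Young's inequality with weight (1 - theta) rho0 absorbs the consistency term into the penalty at
   the price of a multiple M of sum_(E on F) (kappa_E grad v . n_E)^2 / tau_E: for the weights
   omega^tau, the square of the weighted mean divided by rho0 equals this sum minus
   rho1 [kappa grad v]^2, which also takes care of the term for eps = 1.  The discrete trace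
   inequality and the Cauchy-Schwarz inequality for kappa_E bound each flux term by
   alpha0^(-1) ||kappa^(1/2) grad v||_E^2 (the factor kappa_(E,F) in tau cancels the contrast), and
   each element has at most eta0 faces, so that
     a_h(v,v) >= (1 - M C0^2) ||kappa^(1/2) grad v||^2 + theta |v|_(0,h)^2.
   With theta = (1 - 2 C0^2)/2 both coefficients are at least (1 - 2 C0^2)/(2 (1 + 2 C0^2)). *)

abbreviation multi_indices :: "nat \<Rightarrow> ('n::finite \<Rightarrow> nat) set" where
  "multi_indices k \<equiv> {\<alpha>. sum \<alpha> UNIV \<le> k}"

definition monomial :: "('n::finite \<Rightarrow> nat) \<Rightarrow> 'n pt \<Rightarrow> real" where
  "monomial \<alpha> x = (\<Prod>i\<in>UNIV. (x $ i) ^ \<alpha> i)"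

definition monomial_partial :: "('n::finite \<Rightarrow> nat) \<Rightarrow> 'n \<Rightarrow> 'n pt \<Rightarrow> real" where
  "monomial_partial \<alpha> j x = of_nat (\<alpha> j) * (x $ j) ^ (\<alpha> j - 1) * (\<Prod>i\<in>UNIV - {j}. (x $ i) ^ \<alpha> i)"

lemma finite_multi_indices: "finite (multi_indices k :: ('n::finite \<Rightarrow> nat) set)"
proof (rule finite_subset)
  show "multi_indices k \<subseteq> PiE (UNIV :: 'n set) (\<lambda>_. {..k})"
  proof
    fix \<alpha> :: "'n \<Rightarrow> nat"
    assume "\<alpha> \<in> multi_indices k"
    then have "\<alpha> i \<le> k" for i
      using member_le_sum[of i UNIV \<alpha>] by simp
    then show "\<alpha> \<in> PiE UNIV (\<lambda>_. {..k})" by auto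
  qed
qed (intro finite_PiE; simp)

lemma has_derivative_monomial:
  "(monomial \<alpha> has_derivative (\<lambda>h. (\<chi> j. monomial_partial \<alpha> j x) \<bullet> h)) (at x)"
proof -
  have "(monomial \<alpha> has_derivative (\<lambda>h. \<Sum>i\<in>UNIV. (of_nat (\<alpha> i) * (h $ i) * (x $ i) ^ (\<alpha> i - 1)) *
          (\<Prod>j\<in>UNIV - {i}. (x $ j) ^ \<alpha> j))) (at x)"
    unfolding monomial_def
    by (intro has_derivative_prod has_derivative_power bounded_linear_imp_has_derivative
        bounded_linear_vec_nth)
  then show ?thesis
    by (rule has_derivative_eq_rhs) (auto simp: inner_vec_def monomial_partial_def intro!: ext sum.cong)
qed

lemma grad_eqI:
  assumes "(f has_derivative (\<lambda>h. g \<bullet> h)) (at x)"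
  shows "grad f x = g"
proof -
  have "(f has_derivative (\<lambda>h. grad f x \<bullet> h)) (at x)"
    unfolding grad_def using assms by (rule someI)
  then have "(\<lambda>h. grad f x \<bullet> h) = (\<lambda>h. g \<bullet> h)"
    using assms by (rule has_derivative_unique)
  then have "grad f x \<bullet> (grad f x - g) = g \<bullet> (grad f x - g)"
    by metis
  then have "(grad f x - g) \<bullet> (grad f x - g) = 0"
    by (simp add: inner_diff_left)
  then show ?thesis by simp
qed

lemma grad_poly:
  "grad (\<lambda>x. \<Sum>\<alpha>\<in>multi_indices k. c \<alpha> * monomial \<alpha> x) x
     = (\<chi> j. \<Sum>\<alpha>\<in>multi_indices k. c \<alpha> * monomial_partial \<alpha> j x)"
proof (rule grad_eqI)
  have "((\<lambda>x. \<Sum>\<alpha>\<in>multi_indices k. c \<alpha> * monomial \<alpha> x) has_derivative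
         (\<lambda>h. \<Sum>\<alpha>\<in>multi_indices k. c \<alpha> * ((\<chi> j. monomial_partial \<alpha> j x) \<bullet> h))) (at x)"
    by (intro has_derivative_sum has_derivative_mult_right has_derivative_monomial)
  moreover have "(\<Sum>\<alpha>\<in>multi_indices k. c \<alpha> * ((\<chi> j. monomial_partial \<alpha> j x) \<bullet> h))
      = (\<chi> j. \<Sum>\<alpha>\<in>multi_indices k. c \<alpha> * monomial_partial \<alpha> j x) \<bullet> h" for h
    by (simp add: inner_vec_def sum_distrib_left sum_distrib_right mult.assoc) (rule sum.swap)
  ultimately show "((\<lambda>x. \<Sum>\<alpha>\<in>multi_indices k. c \<alpha> * monomial \<alpha> x) has_derivative
      (\<lambda>h. (\<chi> j. \<Sum>\<alpha>\<in>multi_indices k. c \<alpha> * monomial_partial \<alpha> j x) \<bullet> h)) (at x)"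
    by simp
qed

lemma poly_deg_iff: "poly_deg k p \<longleftrightarrow> (\<exists>c. p = (\<lambda>x. \<Sum>\<alpha>\<in>multi_indices k. c \<alpha> * monomial \<alpha> x))"
  unfolding poly_deg_def monomial_def by (simp add: fun_eq_iff)

lemma poly_degE:
  assumes "poly_deg k p"
  obtains c where "p = (\<lambda>x. \<Sum>\<alpha>\<in>multi_indices k. c \<alpha> * monomial \<alpha> x)"
  using assms unfolding poly_deg_iff by blast

lemma poly_deg_add:
  assumes "poly_deg k f" "poly_deg k g"
  shows "poly_deg k (\<lambda>x. f x + g x)"
proof -
  obtain c where f: "f = (\<lambda>x. \<Sum>\<alpha>\<in>multi_indices k. c \<alpha> * monomial \<alpha> x)"
    using assms(1) by (rule poly_degE)
  obtain d where g: "g = (\<lambda>x. \<Sum>\<alpha>\<in>multi_indices k. d \<alpha> * monomial \<alpha> x)"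
    using assms(2) by (rule poly_degE)
  show ?thesis
    unfolding f g poly_deg_iff
    by (intro exI[of _ "\<lambda>\<alpha>. c \<alpha> + d \<alpha>"]) (simp add: distrib_right sum.distrib)
qed

lemma poly_deg_cmult:
  assumes "poly_deg k f"
  shows "poly_deg k (\<lambda>x. a * f x)"
proof -
  obtain c where "f = (\<lambda>x. \<Sum>\<alpha>\<in>multi_indices k. c \<alpha> * monomial \<alpha> x)"
    using assms by (rule poly_degE)
  then show ?thesis
    unfolding poly_deg_iff
    by (intro exI[of _ "\<lambda>\<alpha>. a * c \<alpha>"]) (simp add: sum_distrib_left mult.assoc)
qed

lemma poly_deg_zero: "poly_deg k (\<lambda>x. 0)"
  unfolding poly_deg_iff by (intro exI[of _ "\<lambda>_. 0"]) simp

lemma poly_deg_sum: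
  "finite I \<Longrightarrow> (\<And>i. i \<in> I \<Longrightarrow> poly_deg k (f i)) \<Longrightarrow> poly_deg k (\<lambda>x. \<Sum>i\<in>I. f i x)"
  by (induction I rule: finite_induct) (auto intro: poly_deg_add poly_deg_zero)

lemma poly_deg_monomial:
  assumes "\<beta> \<in> multi_indices k"
  shows "poly_deg k (monomial \<beta>)"
  unfolding poly_deg_iff
proof (intro exI[of _ "\<lambda>\<gamma>. if \<gamma> = \<beta> then 1 else 0"] ext)
  fix x
  have "(\<Sum>\<alpha>\<in>multi_indices k. (if \<alpha> = \<beta> then 1 else 0) * monomial \<alpha> x)
      = (\<Sum>\<alpha>\<in>multi_indices k. if \<alpha> = \<beta> then monomial \<alpha> x else 0)"
    by (rule sum.cong) auto
  then show "monomial \<beta> x = (\<Sum>\<alpha>\<in>multi_indices k. (if \<alpha> = \<beta> then 1 else 0) * monomial \<alpha> x)"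
    using assms by (simp add: sum.delta[OF finite_multi_indices])
qed

lemma monomial_partial_eq:
  "monomial_partial \<alpha> j x = of_nat (\<alpha> j) * monomial (\<alpha>(j := \<alpha> j - 1)) x"
proof -
  have "(\<Prod>i\<in>UNIV - {j}. (x $ i) ^ (\<alpha>(j := \<alpha> j - 1)) i) = (\<Prod>i\<in>UNIV - {j}. (x $ i) ^ \<alpha> i)"
    by (rule prod.cong) auto
  then show ?thesis
    unfolding monomial_partial_def monomial_def
    by (simp add: prod.remove[of UNIV j] mult.assoc)
qed

lemma poly_deg_monomial_partial:
  assumes "\<alpha> \<in> multi_indices k"
  shows "poly_deg k (monomial_partial \<alpha> j)"
proof -
  have "sum (\<alpha>(j := \<alpha> j - 1)) UNIV \<le> sum \<alpha> UNIV"
    by (rule sum_mono) auto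
  then have "\<alpha>(j := \<alpha> j - 1) \<in> multi_indices k"
    using assms by simp
  then show ?thesis
    unfolding monomial_partial_eq[abs_def] by (intro poly_deg_cmult poly_deg_monomial)
qed

lemma poly_deg_grad_component:
  assumes "poly_deg k p"
  shows "poly_deg k (\<lambda>x. grad p x $ j)"
proof -
  obtain c where "p = (\<lambda>x. \<Sum>\<alpha>\<in>multi_indices k. c \<alpha> * monomial \<alpha> x)"
    using assms by (rule poly_degE)
  then show ?thesis
    by (simp add: grad_poly, intro poly_deg_sum finite_multi_indices poly_deg_cmult
        poly_deg_monomial_partial) auto
qed

lemma poly_deg_flux:
  assumes "poly_deg k p"
  shows "poly_deg k (\<lambda>x. (M *v grad p x) \<bullet> n)"
proof -
  have "(M *v grad p x) \<bullet> n = (\<Sum>j\<in>UNIV. \<Sum>i\<in>UNIV. (n $ j * M $ j $ i) * grad p x $ i)" for x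
    by (simp add: inner_vec_def matrix_vector_mult_def sum_distrib_left mult_ac)
  moreover have "poly_deg k (\<lambda>x. \<Sum>j\<in>UNIV. \<Sum>i\<in>UNIV. (n $ j * M $ j $ i) * grad p x $ i)"
    by (intro poly_deg_sum poly_deg_cmult poly_deg_grad_component[OF assms]) auto
  ultimately show ?thesis by simp
qed

lemma continuous_on_poly: "poly_deg k p \<Longrightarrow> continuous_on UNIV p"
  by (elim poly_degE) (simp add: monomial_def continuous_intros)

lemma continuous_on_grad_poly: "poly_deg k p \<Longrightarrow> continuous_on UNIV (grad p)"
  by (elim poly_degE) (simp add: grad_poly monomial_partial_def continuous_intros)

section \<open>Simplices and outward normals\<close>

lemma finite_simplex: "is_simplex E \<Longrightarrow> finite E"
  unfolding is_simplex_def using card_ge_0_finite by force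

lemma finite_face: "is_simplex E \<Longrightarrow> F \<in> faces_of E \<Longrightarrow> finite F"
  unfolding faces_of_def using finite_simplex finite_subset by blast

lemma hE_pos:
  fixes E :: "'n::finite smplx"
  assumes "is_simplex E"
  shows "0 < hE E"
proof -
  have "2 \<le> card E"
    using assms unfolding is_simplex_def by simp
  then obtain P where "P \<subseteq> E" "card P = 2"
    by (rule obtain_subset_with_card_n)
  then obtain x y where xy: "x \<in> E" "y \<in> E" "x \<noteq> y"
    unfolding card_2_iff by blast
  have "bounded (convex hull E)"
    using finite_simplex[OF assms] by (simp add: compact_imp_bounded finite_imp_compact_convex_hull)
  then have "dist x y \<le> hE E"
    unfolding hE_def using xy by (intro diameter_bounded_bound hull_inc)
  moreover have "0 < dist x y"
    using xy(3) by simp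
  ultimately show ?thesis
    by linarith
qed

lemma face_nonempty: "F \<in> faces_of E \<Longrightarrow> F \<noteq> {}"
  unfolding faces_of_def by auto

lemma face_affine_independent: "is_simplex E \<Longrightarrow> F \<in> faces_of E \<Longrightarrow> \<not> affine_dependent F"
  unfolding is_simplex_def faces_of_def using affine_independent_subset by blast

lemma simplex_opposite_vertex:
  fixes E :: "'n::finite smplx"
  assumes "is_simplex E" "F \<in> faces_of E"
  obtains p where "E = insert p F" "p \<notin> F"
proof -
  have FE: "F \<subseteq> E" and "card F = CARD('n)" "card E = CARD('n) + 1"
    using assms unfolding faces_of_def is_simplex_def by auto
  then have "card (E - F) = 1"
    using finite_simplex[OF assms(1)] by (simp add: card_Diff_subset finite_subset)
  then obtain p where "E - F = {p}"
    by (auto simp: card_1_singleton_iff)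
  then show ?thesis
    using that FE by blast
qed

lemma orthogonal_span_differences:
  assumes "\<forall>b\<in>F. (b - a) \<bullet> n = 0" "w \<in> span ((+) (- a) ` F)"
  shows "w \<bullet> n = 0"
proof -
  have "orthogonal n y" if y: "y \<in> (+) (- a) ` F" for y
  proof -
    obtain b where "b \<in> F" "y = - a + b"
      using y by blast
    then show ?thesis
      using assms(1) by (simp add: orthogonal_def inner_commute)
  qed
  then have "orthogonal n w"
    by (rule orthogonal_to_span[OF assms(2)])
  then show ?thesis
    by (simp add: orthogonal_def inner_commute)
qed

lemma convex_hull_in_hyperplane:
  assumes "a \<in> F" "\<forall>b\<in>F. (b - a) \<bullet> m = 0" "y \<in> convex hull F"
  shows "(y - a) \<bullet> m = 0"
proof -
  have "convex hull F \<subseteq> {y. (y - a) \<bullet> m = 0}"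
  proof (rule hull_minimal)
    show "F \<subseteq> {y. (y - a) \<bullet> m = 0}"
      using assms(2) by blast
    have "{y. (y - a) \<bullet> m = 0} = {y. m \<bullet> y = m \<bullet> a}"
      by (auto simp: inner_diff_left inner_diff_right inner_commute)
    then show "convex {y. (y - a) \<bullet> m = 0}"
      by (metis convex_hyperplane)
  qed
  then show ?thesis
    using assms(3) by blast
qed

lemma orthogonal_to_face_exists:
  fixes F :: "'a::euclidean_space set"
  assumes a: "a \<in> F" and p: "p \<notin> affine hull F"
  obtains z where "z \<noteq> 0" "\<And>b c. b \<in> F \<Longrightarrow> c \<in> F \<Longrightarrow> (b - c) \<bullet> z = 0" "0 < (p - a) \<bullet> z"
proof -
  define S where "S = span ((+) (- a) ` F)"
  have pS: "p - a \<notin> S"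
  proof
    assume "p - a \<in> S"
    then have "a + (p - a) \<in> (\<lambda>x. a + x) ` S"
      by (rule imageI)
    then show False
      using p unfolding S_def affine_hull_span_gen[OF hull_inc[OF a]] by simp
  qed
  obtain y z where "y \<in> span ((+) (- a) ` F)"
    "\<And>w. w \<in> span ((+) (- a) ` F) \<Longrightarrow> orthogonal z w" "p - a = y + z"
    by (rule orthogonal_subspace_decomp_exists[of "(+) (- a) ` F" "p - a"]) blast
  note yz = this[folded S_def]
  have "z \<noteq> 0"
    using yz pS by auto
  have tangent: "(b - c) \<bullet> z = 0" if "b \<in> F" "c \<in> F" for b c
  proof -
    have "(- a + b) - (- a + c) \<in> S"
      unfolding S_def using that by (intro span_diff span_base) auto
    then have "orthogonal z (b - c)"
      using yz(2) by simp
    then show ?thesis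
      unfolding orthogonal_def by (simp add: inner_commute)
  qed
  have "z \<bullet> y = 0"
    using yz(2)[OF yz(1)] unfolding orthogonal_def .
  then have "(p - a) \<bullet> z = z \<bullet> z"
    unfolding yz(3) by (simp add: inner_add_left inner_add_right inner_commute)
  then have "0 < (p - a) \<bullet> z"
    using \<open>z \<noteq> 0\<close> by simp
  then show ?thesis
    using that \<open>z \<noteq> 0\<close> tangent by blast
qed

lemma outward_normal_exists:
  assumes "is_simplex E" "F \<in> faces_of E"
  shows "\<exists>n. norm n = 1 \<and> (\<forall>a\<in>F. \<forall>b\<in>F. (a - b) \<bullet> n = 0) \<and> (\<forall>a\<in>F. \<forall>p\<in>E - F. (p - a) \<bullet> n < 0)"
proof -
  obtain p where E: "E = insert p F" "p \<notin> F"
    using assms by (rule simplex_opposite_vertex)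
  obtain a where a: "a \<in> F"
    using face_nonempty[OF assms(2)] by blast
  have "p \<notin> affine hull F"
    using assms(1) E unfolding is_simplex_def affine_dependent_def by auto
  then obtain z where z: "z \<noteq> 0" "\<And>b c. b \<in> F \<Longrightarrow> c \<in> F \<Longrightarrow> (b - c) \<bullet> z = 0"
    "0 < (p - a) \<bullet> z"
    using orthogonal_to_face_exists[OF a] by blast
  define n where "n = - (1 / norm z) *\<^sub>R z"
  have "(b - c) \<bullet> n = 0" if "b \<in> F" "c \<in> F" for b c
    using z(2)[OF that] unfolding n_def by simp
  moreover have "(q - b) \<bullet> n < 0" if "b \<in> F" "q \<in> E - F" for b q
  proof -
    have "q = p"
      using that E by blast
    then have "(q - b) \<bullet> z = (p - a) \<bullet> z - (b - a) \<bullet> z"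
      by (simp add: inner_diff_left)
    then have "0 < (q - b) \<bullet> z"
      using z(2)[OF that(1) a] z(3) by simp
    then show ?thesis
      unfolding n_def using z(1) by (simp add: zero_less_divide_iff)
  qed
  moreover have "norm n = 1"
    unfolding n_def using z(1) by simp
  ultimately show ?thesis
    by blast
qed

lemma nrm_spec:
  assumes "is_simplex E" "F \<in> faces_of E"
  shows "norm (nrm E F) = 1" "a \<in> F \<Longrightarrow> b \<in> F \<Longrightarrow> (b - a) \<bullet> nrm E F = 0"
    "a \<in> F \<Longrightarrow> p \<in> E - F \<Longrightarrow> (p - a) \<bullet> nrm E F < 0"
  using someI_ex[OF outward_normal_exists[OF assms]] unfolding nrm_def by blast+

lemma unit_normal_unique:
  fixes F :: "'n::finite pt set"
  assumes F: "\<not> affine_dependent F" "card F = CARD('n)" "a \<in> F"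
    and n: "norm n = 1" "\<forall>b\<in>F. (b - a) \<bullet> n = 0"
    and m: "norm m = 1" "\<forall>b\<in>F. (b - a) \<bullet> m = 0"
  shows "m = n \<or> m = - n"
proof (rule ccontr)
  assume nm: "\<not> (m = n \<or> m = - n)"
  define S where "S = span ((+) (- a) ` F)"
  define N where "N = {y \<in> UNIV. \<forall>x\<in>S. orthogonal x y}"
  have "int (dim S) = aff_dim F"
    unfolding S_def dim_span by (rule aff_dim_eq_dim[OF hull_inc[OF F(3)], symmetric])
  then have "dim S + 1 = CARD('n)"
    using aff_dim_affine_independent[OF F(1)] F(2) by simp
  moreover have "dim N + dim S = dim (UNIV :: 'n pt set)"
    unfolding N_def S_def by (rule dim_subspace_orthogonal_to_vectors) auto
  ultimately have dN: "dim N = 1" by simp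
  have "x \<bullet> n = 0" "x \<bullet> m = 0" if "x \<in> S" for x
    using that orthogonal_span_differences n(2) m(2) unfolding S_def by blast+
  then have "n \<in> N" "m \<in> N"
    unfolding N_def orthogonal_def by auto
  moreover have "m \<notin> span {n}"
  proof
    assume "m \<in> span {n}"
    then obtain c where "m = c *\<^sub>R n"
      by (auto simp: span_singleton)
    moreover then have "\<bar>c\<bar> = 1"
      using n m by simp
    ultimately show False
      using nm by (auto simp: abs_if split: if_splits)
  qed
  moreover have "m \<noteq> n" "n \<noteq> 0"
    using nm n by auto
  ultimately have "independent {m, n}" "{m, n} \<subseteq> N"
    by (auto simp: independent_insert)
  then have "card {m, n} \<le> dim N"
    by (rule independent_card_le_dim[rotated])
  then show False
    using dN \<open>m \<noteq> n\<close> by simp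
qed

lemma segment_leaves_hyperplane:
  assumes a: "a \<in> F" "\<forall>b\<in>F. (b - a) \<bullet> m = 0" and c: "c \<in> convex hull F"
    and "0 < s" "(q - a) \<bullet> m < 0"
  shows "(1 - s) *\<^sub>R c + s *\<^sub>R q \<notin> convex hull F"
proof
  assume "(1 - s) *\<^sub>R c + s *\<^sub>R q \<in> convex hull F"
  then have "((1 - s) *\<^sub>R c + s *\<^sub>R q - a) \<bullet> m = 0"
    by (rule convex_hull_in_hyperplane[OF a])
  moreover have "(c - a) \<bullet> m = 0"
    using c by (rule convex_hull_in_hyperplane[OF a])
  moreover have "(1 - s) *\<^sub>R c + s *\<^sub>R q - a = (1 - s) *\<^sub>R (c - a) + s *\<^sub>R (q - a)"
    by (simp add: algebra_simps)
  ultimately have "s * ((q - a) \<bullet> m) = 0"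
    by (simp add: inner_add_left)
  then show False
    using assms(4,5) by simp
qed

lemma barycenter_in_convex_hull:
  assumes "finite F" "F \<noteq> {}"
  shows "(\<Sum>v\<in>F. (1 / card F) *\<^sub>R v) \<in> convex hull F"
  using assms unfolding convex_hull_finite[OF assms(1)]
  by (intro CollectI exI[of _ "\<lambda>_. 1 / card F"]) simp

lemma small_step_keeps_weights_nonneg:
  assumes "finite F" "F \<noteq> {}"
  obtains s :: real where "0 < s" "s \<le> 1" "\<And>v. v \<in> F \<Longrightarrow> 0 \<le> (1 - s) / card F + s * u v"
proof -
  define d U s where "d = real (card F)" and "U = (\<Sum>v\<in>F. \<bar>u v\<bar>)" and "s = 1 / (1 + d * U)"
  have d: "0 < d" and U: "0 \<le> U"
    using assms unfolding d_def U_def by (auto simp: card_gt_0_iff sum_nonneg)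
  then have D: "0 < 1 + d * U"
    by (simp add: add_pos_nonneg)
  then have s: "0 < s" "s \<le> 1"
    unfolding s_def using d U by auto
  have "s * (1 + d * U) = 1"
    unfolding s_def using D by simp
  then have sdU: "(1 - s) / d = s * U"
    using d by (simp add: field_simps)
  have "0 \<le> (1 - s) / d + s * u v" if "v \<in> F" for v
  proof -
    have "\<bar>u v\<bar> \<le> U"
      using that assms(1) unfolding U_def by (intro member_le_sum) auto
    then have "s * (- U) \<le> s * u v"
      using s by (intro mult_left_mono) auto
    then show ?thesis
      using sdU by simp
  qed
  then show ?thesis
    using that s unfolding d_def by blast
qed

lemma segment_from_barycenter_in_convex_hull:
  fixes F :: "'a::real_vector set"
  assumes fF: "finite F" "F \<noteq> {}" and p: "p \<notin> F"
    and u: "sum u (insert p F) = 1" "0 < u p"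
  obtains s where "0 < s" "s \<le> 1"
    "(1 - s) *\<^sub>R (\<Sum>v\<in>F. (1 / card F) *\<^sub>R v) + s *\<^sub>R (\<Sum>v\<in>insert p F. u v *\<^sub>R v) \<in> convex hull (insert p F)"
proof -
  obtain s where s: "0 < s" "s \<le> 1" and wF_nonneg: "\<And>v. v \<in> F \<Longrightarrow> 0 \<le> (1 - s) / card F + s * u v"
    using small_step_keeps_weights_nonneg[OF fF, where u = u] by blast
  define w where "w v = (if v = p then s * u p else (1 - s) / card F + s * u v)" for v
  have wF: "w v = (1 - s) / card F + s * u v" if "v \<in> F" for v
    using that p unfolding w_def by auto
  have w_nonneg: "\<forall>v\<in>insert p F. 0 \<le> w v"
    using wF wF_nonneg s u by (auto simp: w_def)
  have "card F \<noteq> 0"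
    using fF by simp
  have "sum w F = (\<Sum>v\<in>F. (1 - s) / card F + s * u v)"
    by (rule sum.cong[OF refl wF])
  then have wF_sum: "sum w F = (1 - s) + s * sum u F"
    using \<open>card F \<noteq> 0\<close> by (simp add: sum.distrib sum_distrib_left)
  have "sum w (insert p F) = w p + sum w F"
    using fF p by simp
  also have "\<dots> = s * sum u (insert p F) + (1 - s)"
    using fF p unfolding wF_sum by (simp add: w_def distrib_left)
  finally have w_sum: "sum w (insert p F) = 1"
    using u by simp
  have "(\<Sum>v\<in>F. w v *\<^sub>R v) = (\<Sum>v\<in>F. ((1 - s) / card F) *\<^sub>R v + (s * u v) *\<^sub>R v)"
    by (rule sum.cong) (simp_all add: wF scaleR_add_left)
  also have "\<dots> = (1 - s) *\<^sub>R (\<Sum>v\<in>F. (1 / card F) *\<^sub>R v) + s *\<^sub>R (\<Sum>v\<in>F. u v *\<^sub>R v)"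
    by (simp add: sum.distrib scaleR_sum_right)
  finally have w_comb: "(\<Sum>v\<in>insert p F. w v *\<^sub>R v)
      = (1 - s) *\<^sub>R (\<Sum>v\<in>F. (1 / card F) *\<^sub>R v) + s *\<^sub>R (\<Sum>v\<in>insert p F. u v *\<^sub>R v)"
    using fF p by (simp add: w_def scaleR_add_right)
  have "(1 - s) *\<^sub>R (\<Sum>v\<in>F. (1 / card F) *\<^sub>R v) + s *\<^sub>R (\<Sum>v\<in>insert p F. u v *\<^sub>R v)
      \<in> convex hull (insert p F)"
    unfolding convex_hull_finite[OF finite.insertI[OF fF(1)]] w_comb[symmetric]
    using w_nonneg w_sum by (intro CollectI exI[of _ w]) simp
  with s show ?thesis
    by (rule that)
qed

lemma simplices_Int_shared_face:
  fixes E E' :: "'n::finite smplx"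
  assumes "is_simplex E" "is_simplex E'" "F \<in> faces_of E" "F \<in> faces_of E'" "E \<noteq> E'"
  shows "E \<inter> E' = F"
proof -
  obtain p where p: "E = insert p F" "p \<notin> F"
    using assms(1,3) by (rule simplex_opposite_vertex)
  obtain p' where p': "E' = insert p' F" "p' \<notin> F"
    using assms(2,4) by (rule simplex_opposite_vertex)
  have "p \<notin> E'"
  proof
    assume "p \<in> E'"
    then have "E \<subseteq> E'"
      using p p' by blast
    then show False
      using assms(1,2,5) card_subset_eq[OF finite_simplex[OF assms(2)]]
      unfolding is_simplex_def by metis
  qed
  then show ?thesis
    using p p' by blast
qed

lemma opposite_vertex_weight_pos:
  fixes E :: "'n::finite smplx"
  assumes E: "is_simplex E" "E = insert p F" "p \<notin> F"
    and a: "a \<in> F" "\<forall>b\<in>F. (b - a) \<bullet> m = 0" and side: "(p - a) \<bullet> m < 0" "(q - a) \<bullet> m < 0"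
  obtains u where "sum u E = 1" "(\<Sum>v\<in>E. u v *\<^sub>R v) = q" "0 < u p"
proof -
  have "affine hull E = UNIV"
    using E(1) aff_dim_affine_independent[of E] aff_dim_eq_full[of E]
    unfolding is_simplex_def by simp
  then obtain u where u: "sum u E = 1" "(\<Sum>v\<in>E. u v *\<^sub>R v) = q"
    using affine_hull_finite[OF finite_simplex[OF E(1)]] by blast
  have "finite F"
    using finite_simplex[OF E(1)] E(2) by simp
  have "q - a = (\<Sum>v\<in>E. u v *\<^sub>R (v - a))"
    using u by (simp add: scaleR_diff_right sum_subtractf flip: scaleR_sum_left)
  then have "(q - a) \<bullet> m = (\<Sum>v\<in>E. u v * ((v - a) \<bullet> m))"
    by (simp add: inner_sum_left)
  also have "\<dots> = u p * ((p - a) \<bullet> m)"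
    using \<open>finite F\<close> E(2,3) a(2) by simp
  finally have "0 < u p"
    using side by (simp add: mult_less_0_iff)
  with u show ?thesis
    by (rule that)
qed

section \<open>Face and element integrals\<close>

definition face_prism :: "'n::finite pt set \<Rightarrow> 'n pt \<Rightarrow> 'n pt set" where
  "face_prism F n = {y + t *\<^sub>R n | y t. y \<in> convex hull F \<and> t \<in> {0..1}}"

definition face_proj :: "'n::finite pt set \<Rightarrow> 'n pt \<Rightarrow> 'n pt \<Rightarrow> 'n pt" where
  "face_proj F n x = x - ((x - (SOME a. a \<in> F)) \<bullet> n) *\<^sub>R n"

lemma face_int_prism: "face_int F n f = integral (face_prism F n) (\<lambda>x. f (face_proj F n x))"
  unfolding face_int_def face_prism_def face_proj_def Let_def ..

lemma compact_face_prism: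
  assumes "finite F"
  shows "compact (face_prism F n)"
proof -
  have "face_prism F n = (\<lambda>z. fst z + snd z *\<^sub>R n) ` ((convex hull F) \<times> {0..1})"
  proof (intro set_eqI iffI)
    fix x
    assume "x \<in> face_prism F n"
    then obtain y t where "x = y + t *\<^sub>R n" "y \<in> convex hull F" "t \<in> {0..1::real}"
      unfolding face_prism_def by blast
    then show "x \<in> (\<lambda>z. fst z + snd z *\<^sub>R n) ` ((convex hull F) \<times> {0..1})"
      by (intro image_eqI[of _ _ "(y, t)"]) auto
  qed (force simp: face_prism_def)
  moreover have "compact ((convex hull F) \<times> {0..1::real})"
    using assms by (intro compact_Times finite_imp_compact_convex_hull) auto
  ultimately show ?thesis
    by (simp add: compact_continuous_image continuous_intros)
qed

lemma integrable_on_compact_continuous: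
  fixes f :: "'a::euclidean_space \<Rightarrow> real"
  assumes "compact S" "continuous_on S f"
  shows "f integrable_on S"
proof -
  obtain B where "\<And>x. x \<in> S \<Longrightarrow> norm (f x) \<le> B"
    using compact_imp_bounded[OF compact_continuous_image[OF assms(2,1)]]
    unfolding bounded_iff by auto
  then have "f absolutely_integrable_on S"
    using continuous_imp_measurable_on_sets_lebesgue[OF assms(2)] lmeasurable_compact[OF assms(1)]
    by (intro measurable_bounded_by_integrable_imp_absolutely_integrable[where g = "\<lambda>_. B"])
       (auto intro: integrable_on_const)
  then show ?thesis
    by (simp add: absolutely_integrable_on_def)
qed

lemma face_int_integrable:
  fixes f :: "'n::finite pt \<Rightarrow> real"
  assumes "finite F" "continuous_on UNIV f"
  shows "(\<lambda>x. f (face_proj F n x)) integrable_on face_prism F n"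
proof (rule integrable_on_compact_continuous[OF compact_face_prism[OF assms(1)]])
  have "continuous_on UNIV (face_proj F n)"
    unfolding face_proj_def by (intro continuous_intros)
  then show "continuous_on (face_prism F n) (\<lambda>x. f (face_proj F n x))"
    by (rule continuous_on_subset[OF continuous_on_compose2[OF assms(2)]]) auto
qed

lemma face_int_mono:
  assumes "finite F" "continuous_on UNIV f" "continuous_on UNIV g" "\<And>x. f x \<le> g x"
  shows "face_int F n f \<le> face_int F n g"
  unfolding face_int_prism using assms
  by (intro integral_le face_int_integrable) auto

lemma face_int_nonneg:
  assumes "finite F" "continuous_on UNIV f" "\<And>x. 0 \<le> f x"
  shows "0 \<le> face_int F n f"
  unfolding face_int_prism using assms
  by (intro integral_nonneg face_int_integrable) auto

lemma face_int_add:
  assumes "finite F" "continuous_on UNIV f" "continuous_on UNIV g"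
  shows "face_int F n (\<lambda>x. f x + g x) = face_int F n f + face_int F n g"
  unfolding face_int_prism using assms
  by (intro integral_add face_int_integrable)

lemma face_int_cmult: "face_int F n (\<lambda>x. c * f x) = c * face_int F n f"
  unfolding face_int_prism by simp

lemma face_int_lincomb2:
  assumes "finite F" "continuous_on UNIV f" "continuous_on UNIV g"
  shows "face_int F n (\<lambda>x. a * f x + b * g x) = a * face_int F n f + b * face_int F n g"
  using assms by (simp add: face_int_add face_int_cmult continuous_intros)

lemma face_int_lincomb3:
  assumes "finite F" "continuous_on UNIV f" "continuous_on UNIV g" "continuous_on UNIV h"
  shows "face_int F n (\<lambda>x. a * f x + b * g x + c * h x)
    = a * face_int F n f + b * face_int F n g + c * face_int F n h"
  using assms by (simp add: face_int_add face_int_lincomb2 face_int_cmult continuous_intros)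

lemma face_int_sum:
  assumes "finite F" "finite I" "\<And>i. i \<in> I \<Longrightarrow> continuous_on UNIV (f i)"
  shows "face_int F n (\<lambda>x. \<Sum>i\<in>I. f i x) = (\<Sum>i\<in>I. face_int F n (f i))"
  unfolding face_int_prism using assms
  by (intro integral_sum face_int_integrable) auto

lemma face_prism_uminus: "face_prism F (- n) = (\<lambda>x. x - n) ` face_prism F n"
  unfolding face_prism_def
proof (intro set_eqI iffI)
  fix x
  assume "x \<in> {y + t *\<^sub>R - n |y t. y \<in> convex hull F \<and> t \<in> {0..1}}"
  then obtain y t where "x = y + t *\<^sub>R - n" "y \<in> convex hull F" "t \<in> {0..1::real}"
    by blast
  then show "x \<in> (\<lambda>x. x - n) ` {y + t *\<^sub>R n |y t. y \<in> convex hull F \<and> t \<in> {0..1}}"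
    by (intro image_eqI[of _ _ "y + (1 - t) *\<^sub>R n"] CollectI exI[of _ y] exI[of _ "1 - t"])
       (auto simp: algebra_simps)
next
  fix x
  assume "x \<in> (\<lambda>x. x - n) ` {y + t *\<^sub>R n |y t. y \<in> convex hull F \<and> t \<in> {0..1}}"
  then obtain y t where "x = y + t *\<^sub>R n - n" "y \<in> convex hull F" "t \<in> {0..1::real}"
    by blast
  then show "x \<in> {y + t *\<^sub>R - n |y t. y \<in> convex hull F \<and> t \<in> {0..1}}"
    by (intro CollectI exI[of _ y] exI[of _ "1 - t"]) (auto simp: algebra_simps)
qed

text \<open>The prism for -n is the translate by -n of the prism for n, and the integrand, being composed
  with the projection onto the face, is invariant under translation along n.\<close>
lemma face_int_uminus_normal:
  assumes "finite F" "norm n = 1"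
  shows "face_int F (- n) f = face_int F n f"
proof -
  define S where "S = face_prism F n"
  define g where "g x = f (face_proj F n x)" for x
  have g_shift: "g (x + n) = g x" for x
  proof -
    have "n \<bullet> n = 1"
      using assms(2) by (simp add: power2_norm_eq_inner[symmetric])
    then show ?thesis
      unfolding g_def face_proj_def by (simp add: algebra_simps inner_add_left)
  qed
  have "face_proj F (- n) = face_proj F n"
    unfolding face_proj_def by (simp add: fun_eq_iff)
  then have "face_int F (- n) f = integral ((\<lambda>x. x - n) ` S) g"
    unfolding face_int_prism face_prism_uminus S_def g_def by simp
  obtain b where b: "S \<subseteq> cbox (- b) b"
    using compact_imp_bounded[OF compact_face_prism[OF assms(1)]]
    unfolding S_def by (rule bounded_subset_cbox_symmetric)
  then have "(\<lambda>x. x - n) ` S \<subseteq> cbox (- b - n) (b - n)"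
    by (auto simp: mem_box inner_diff_left)
  then have "integral ((\<lambda>x. x - n) ` S) g
      = integral (cbox (- b - n) (b - n)) (\<lambda>x. if x \<in> (\<lambda>x. x - n) ` S then g x else 0)"
    by (simp add: integral_restrict_Int Int_absorb2)
  also have "\<dots> = integral (cbox (- b - n) (b - n)) (\<lambda>x. if x + n \<in> S then g (x + n) else 0)"
  proof (rule integral_cong)
    fix x
    have "x \<in> (\<lambda>x. x - n) ` S \<longleftrightarrow> x + n \<in> S"
      by (auto intro: image_eqI[of _ _ "x + n"])
    then show "(if x \<in> (\<lambda>x. x - n) ` S then g x else 0) = (if x + n \<in> S then g (x + n) else 0)"
      using g_shift by simp
  qed
  also have "\<dots> = integral (cbox (- b) b) (\<lambda>x. if x \<in> S then g x else 0)"
    by (rule integral_shift_cbox)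
  also have "\<dots> = integral S g"
    using b by (simp add: integral_restrict_Int Int_absorb2)
  finally show ?thesis
    using \<open>face_int F (- n) f = _\<close> unfolding face_int_prism S_def g_def by simp
qed

lemma elem_int_integrable:
  fixes f :: "'a::euclidean_space \<Rightarrow> real"
  assumes "finite E" "continuous_on UNIV f"
  shows "f integrable_on convex hull E"
  by (rule integrable_on_compact_continuous[OF finite_imp_compact_convex_hull[OF assms(1)]])
     (rule continuous_on_subset[OF assms(2)], simp)

lemma elem_int_mono:
  assumes "finite E" "continuous_on UNIV f" "continuous_on UNIV g" "\<And>x. f x \<le> g x"
  shows "elem_int E f \<le> elem_int E g"
  unfolding elem_int_def using assms
  by (intro integral_le elem_int_integrable) auto

lemma elem_int_nonneg:
  assumes "finite E" "continuous_on UNIV f" "\<And>x. 0 \<le> f x"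
  shows "0 \<le> elem_int E f"
  unfolding elem_int_def using assms
  by (intro integral_nonneg elem_int_integrable) auto

lemma elem_int_cmult: "elem_int E (\<lambda>x. c * f x) = c * elem_int E f"
  unfolding elem_int_def by simp

section \<open>Conforming simplicial meshes\<close>

locale simplicial_mesh =
  fixes \<Omega> :: "'n::finite pt set" and T :: "'n smplx set"
  assumes conforming: "conforming_mesh T \<Omega>"
begin

lemma finite_mesh: "finite T"
  using conforming unfolding conforming_mesh_def by simp

lemma simplex_of_mesh: "E \<in> T \<Longrightarrow> is_simplex E"
  using conforming unfolding conforming_mesh_def by simp

lemma convex_hull_Int_elements:
  "E \<in> T \<Longrightarrow> E' \<in> T \<Longrightarrow> E \<noteq> E' \<Longrightarrow> convex hull E \<inter> convex hull E' = convex hull (E \<inter> E')"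
  using conforming unfolding conforming_mesh_def by blast

lemma adj_of_face: "E \<in> T \<Longrightarrow> F \<in> faces_of E \<Longrightarrow> E \<in> adj T F"
  unfolding adj_def faces_of_def by simp

lemma mesh_facesI: "E \<in> T \<Longrightarrow> F \<in> faces_of E \<Longrightarrow> F \<in> mesh_faces T"
  unfolding mesh_faces_def by blast

lemma adjD:
  assumes "F \<in> mesh_faces T" "E \<in> adj T F"
  shows "E \<in> T" "F \<in> faces_of E"
  using assms unfolding mesh_faces_def adj_def faces_of_def by auto

lemma in_mesh_of_adj: "E \<in> adj T F \<Longrightarrow> E \<in> T"
  unfolding adj_def by simp

lemma finite_adj: "finite (adj T F)"
  unfolding adj_def using finite_mesh by simp

lemma finite_mesh_faces: "finite (mesh_faces T)"
  unfolding mesh_faces_def faces_of_def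
  using finite_mesh finite_simplex[OF simplex_of_mesh] by auto

lemma mesh_faces_adj_nonempty: "F \<in> mesh_faces T \<Longrightarrow> adj T F \<noteq> {}"
  unfolding mesh_faces_def adj_def faces_of_def by blast

lemma sum_mesh_faces_adj:
  "(\<Sum>F\<in>mesh_faces T. \<Sum>E\<in>adj T F. g E F) = (\<Sum>E\<in>T. \<Sum>F\<in>faces_of E. g E F)"
proof -
  have "(\<Sum>F\<in>mesh_faces T. \<Sum>E\<in>adj T F. g E F)
      = (\<Sum>E\<in>T. \<Sum>F\<in>{F \<in> mesh_faces T. F \<subseteq> E}. g E F)"
    unfolding adj_def by (rule sum.swap_restrict[OF finite_mesh_faces finite_mesh])
  also have "\<dots> = (\<Sum>E\<in>T. \<Sum>F\<in>faces_of E. g E F)"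
  proof (rule sum.cong[OF refl])
    fix E
    assume "E \<in> T"
    then have "{F \<in> mesh_faces T. F \<subseteq> E} = faces_of E"
      using mesh_facesI unfolding mesh_faces_def faces_of_def by blast
    then show "(\<Sum>F\<in>{F \<in> mesh_faces T. F \<subseteq> E}. g E F) = (\<Sum>F\<in>faces_of E. g E F)"
      by simp
  qed
  finally show ?thesis .
qed

text \<open>If two elements sharing the face F had the same outward normal on F, a point slightly off
  the barycenter of F towards the opposite vertex of one of them would lie in both elements but
  not in F, contradicting conformity.\<close>
lemma nrm_neq_shared_face:
  assumes ET: "E \<in> T" "E' \<in> T" "E \<noteq> E'" and F: "F \<in> faces_of E" "F \<in> faces_of E'"
  shows "nrm E F \<noteq> nrm E' F"
proof
  assume same: "nrm E F = nrm E' F"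
  define m where "m = nrm E F"
  have sE: "is_simplex E" "is_simplex E'"
    using ET simplex_of_mesh by auto
  obtain p where p: "E = insert p F" "p \<notin> F"
    using sE(1) F(1) by (rule simplex_opposite_vertex)
  obtain p' where p': "E' = insert p' F" "p' \<notin> F"
    using sE(2) F(2) by (rule simplex_opposite_vertex)
  have fF: "finite F" "F \<noteq> {}"
    using finite_face[OF sE(1) F(1)] face_nonempty[OF F(1)] by auto
  then obtain a where a: "a \<in> F"
    by blast
  have tangent: "\<forall>b\<in>F. (b - a) \<bullet> m = 0"
    using nrm_spec(2)[OF sE(1) F(1) a] unfolding m_def by blast
  have p_side: "(p - a) \<bullet> m < 0" and p'_side: "(p' - a) \<bullet> m < 0"
    using nrm_spec(3)[OF sE(1) F(1) a, of p] nrm_spec(3)[OF sE(2) F(2) a, of p'] p p'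
    unfolding m_def same by auto
  obtain u where "sum u E = 1" "(\<Sum>v\<in>E. u v *\<^sub>R v) = p'" "0 < u p"
    using opposite_vertex_weight_pos[OF sE(1) p a tangent p_side p'_side] .
  then obtain s where s: "0 < s" "s \<le> 1"
    and "(1 - s) *\<^sub>R (\<Sum>v\<in>F. (1 / card F) *\<^sub>R v) + s *\<^sub>R p' \<in> convex hull E"
    using segment_from_barycenter_in_convex_hull[OF fF p(2), of u] p by auto
  moreover define c where "c = (\<Sum>v\<in>F. (1 / card F) *\<^sub>R v)"
  ultimately have x_E: "(1 - s) *\<^sub>R c + s *\<^sub>R p' \<in> convex hull E"
    by simp
  have c_F: "c \<in> convex hull F"
    unfolding c_def by (rule barycenter_in_convex_hull[OF fF])
  then have "c \<in> convex hull E'"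
    using hull_mono[of F E'] p' by blast
  then have "(1 - s) *\<^sub>R c + s *\<^sub>R p' \<in> convex hull E'"
    using s p' by (intro convexD[OF convex_convex_hull]) (auto intro: hull_inc)
  with x_E have "(1 - s) *\<^sub>R c + s *\<^sub>R p' \<in> convex hull F"
    using convex_hull_Int_elements[OF ET] simplices_Int_shared_face[OF sE F ET(3)] by blast
  then show False
    using segment_leaves_hyperplane[OF a tangent c_F s(1) p'_side] by blast
qed

lemma nrm_adj_opposite:
  assumes "F \<in> mesh_faces T" "E \<in> adj T F" "E' \<in> adj T F" "E \<noteq> E'"
  shows "nrm E' F = - nrm E F"
proof -
  have E: "E \<in> T" "F \<in> faces_of E" and E': "E' \<in> T" "F \<in> faces_of E'"
    using adjD assms by auto
  have sE: "is_simplex E" "is_simplex E'"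
    using E E' simplex_of_mesh by auto
  obtain a where a: "a \<in> F"
    using face_nonempty[OF E(2)] by blast
  have "nrm E' F = nrm E F \<or> nrm E' F = - nrm E F"
    using face_affine_independent[OF sE(1) E(2)] E(2) a
      nrm_spec[OF sE(1) E(2)] nrm_spec[OF sE(2) E'(2)]
    unfolding faces_of_def by (intro unit_normal_unique) auto
  then show ?thesis
    using nrm_neq_shared_face[OF E(1) E'(1) assms(4) E(2) E'(2)] by auto
qed

lemma card_adj_le_2:
  assumes F: "F \<in> mesh_faces T"
  shows "card (adj T F) \<le> 2"
proof (rule ccontr)
  assume "\<not> card (adj T F) \<le> 2"
  then have "3 \<le> card (adj T F)"
    by simp
  then obtain B where B: "B \<subseteq> adj T F" "card B = 3"
    by (rule obtain_subset_with_card_n)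
  then obtain E1 E2 E3 where "B = {E1, E2, E3}" and ne: "E1 \<noteq> E2" "E2 \<noteq> E3" "E1 \<noteq> E3"
    unfolding card_3_iff by blast
  then have E: "E1 \<in> adj T F" "E2 \<in> adj T F" "E3 \<in> adj T F"
    using B by auto
  have "nrm E2 F = - nrm E1 F" "nrm E3 F = - nrm E1 F" "nrm E3 F = - nrm E2 F"
    using nrm_adj_opposite[OF F E(1) E(2) ne(1)] nrm_adj_opposite[OF F E(1) E(3) ne(3)]
      nrm_adj_opposite[OF F E(2) E(3) ne(2)] by simp_all
  then have "nrm E2 F = 0"
    by (simp add: eq_neg_iff_add_eq_0 flip: scaleR_2)
  moreover have "norm (nrm E2 F) = 1"
    using nrm_spec(1)[OF simplex_of_mesh[OF adjD(1)[OF F E(2)]] adjD(2)[OF F E(2)]] .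
  ultimately show False
    by simp
qed

lemma mesh_face_cases:
  assumes F: "F \<in> mesh_faces T"
  obtains (boundary) E where "adj T F = {E}" "F \<in> boundary_faces T" "F \<notin> interior_faces T"
  | (interior) E E' where "adj T F = {E, E'}" "E \<noteq> E'" "nrm E' F = - nrm E F"
      "F \<in> interior_faces T" "F \<notin> boundary_faces T"
proof -
  have "card (adj T F) \<noteq> 0"
    using mesh_faces_adj_nonempty[OF F] finite_adj by simp
  then consider "card (adj T F) = 1" | "card (adj T F) = 2"
    using card_adj_le_2[OF F] by linarith
  then show ?thesis
  proof cases
    case 1
    then show ?thesis
      using boundary F unfolding boundary_faces_def interior_faces_def
      by (auto simp: card_1_singleton_iff)
  next
    case 2
    then obtain E E' where "adj T F = {E, E'}" "E \<noteq> E'"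
      by (auto simp: card_2_iff)
    then show ?thesis
      using interior 2 F nrm_adj_opposite[OF F, of E E'] unfolding boundary_faces_def interior_faces_def
      by auto
  qed
qed

lemma fint_eq_face_int:
  assumes "E \<in> T" "F \<in> faces_of E"
  shows "fint T F g = face_int F (nrm E F) g"
proof -
  have F: "F \<in> mesh_faces T" and E: "E \<in> adj T F"
    using assms mesh_facesI adj_of_face by auto
  define E0 where "E0 = (SOME E. E \<in> adj T F)"
  have "E0 \<in> adj T F"
    unfolding E0_def using E by (rule someI)
  then have "nrm E0 F = nrm E F \<or> nrm E0 F = - nrm E F"
    using nrm_adj_opposite[OF F E] by blast
  moreover have "norm (nrm E F) = 1"
    using nrm_spec(1)[OF simplex_of_mesh[OF assms(1)] assms(2)] .
  moreover have "finite F"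
    using finite_face[OF simplex_of_mesh[OF assms(1)] assms(2)] .
  ultimately show ?thesis
    unfolding fint_def fnrm_def E0_def[symmetric] using face_int_uminus_normal by auto
qed

end

lemma young_ineq:
  fixes e q j m :: real
  assumes q: "0 < q" and e: "0 \<le> e" "e \<le> 2"
  shows "e * (j * m) \<le> q * j\<^sup>2 + m\<^sup>2 / q"
proof -
  have "0 \<le> (q * \<bar>j\<bar> - \<bar>m\<bar>)\<^sup>2"
    by simp
  then have "q * (2 * \<bar>j * m\<bar>) \<le> q * (q * j\<^sup>2 + m\<^sup>2 / q)"
    using q by (simp add: power2_eq_square abs_mult algebra_simps)
  then have "2 * \<bar>j * m\<bar> \<le> q * j\<^sup>2 + m\<^sup>2 / q"
    using q by (simp add: mult_le_cancel_left_pos)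
  moreover have "e * (j * m) \<le> e * \<bar>j * m\<bar>"
    using e by (simp add: mult_left_mono)
  moreover have "e * \<bar>j * m\<bar> \<le> 2 * \<bar>j * m\<bar>"
    using e by (simp add: mult_right_mono)
  ultimately show ?thesis
    by linarith
qed

lemma psd_form_cauchy_schwarz:
  fixes M :: "real^'n::finite^'n"
  assumes "transpose M = M" "\<And>\<xi>. 0 \<le> \<xi> \<bullet> (M *v \<xi>)" "0 < n \<bullet> (M *v n)"
  shows "((M *v g) \<bullet> n)\<^sup>2 \<le> (n \<bullet> (M *v n)) * (g \<bullet> (M *v g))"
proof -
  define A B C where "A = n \<bullet> (M *v n)" and "B = (M *v g) \<bullet> n" and "C = g \<bullet> (M *v g)"
  have sym: "g \<bullet> (M *v n) = (M *v g) \<bullet> n"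
    by (metis assms(1) dot_lmul_matrix vector_transpose_matrix)
  have "0 \<le> (t *\<^sub>R n + g) \<bullet> (M *v (t *\<^sub>R n + g))" for t
    by (rule assms(2))
  also have "(t *\<^sub>R n + g) \<bullet> (M *v (t *\<^sub>R n + g)) = t\<^sup>2 * A + 2 * t * B + C" for t
    unfolding A_def B_def C_def
    by (simp add: matrix_vector_right_distrib matrix_vector_mult_scaleR inner_add_left
        inner_add_right sym inner_commute[of n] power2_eq_square algebra_simps)
  finally have "0 \<le> (- B / A)\<^sup>2 * A + 2 * (- B / A) * B + C" .
  then show ?thesis
    using assms(3) unfolding A_def[symmetric] B_def[symmetric] C_def[symmetric]
    by (simp add: field_simps power2_eq_square)
qed

lemma boundary_face_ineq:
  fixes \<tau> \<epsilon> \<theta> M u a :: real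
  assumes "0 < \<tau>" "\<epsilon> \<in> {-1, 0, 1}" "0 \<le> \<theta>" "\<theta> < 1" "1 / (1 - \<theta>) \<le> M"
  shows "\<theta> * (\<tau> * u\<^sup>2) - M * (a\<^sup>2 / \<tau>) \<le> - (1 + \<epsilon>) * (u * a) + \<tau> * u\<^sup>2"
proof -
  have "(1 + \<epsilon>) * (u * a) \<le> (1 - \<theta>) * \<tau> * u\<^sup>2 + a\<^sup>2 / ((1 - \<theta>) * \<tau>)"
    using assms by (intro young_ineq) auto
  moreover have "a\<^sup>2 / ((1 - \<theta>) * \<tau>) \<le> M * (a\<^sup>2 / \<tau>)"
    using assms mult_right_mono[OF assms(5), of "a\<^sup>2 / \<tau>"] by simp
  ultimately show ?thesis
    by (simp add: algebra_simps)
qed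

lemma weighted_mean_sq_identity:
  fixes t1 t2 a1 a2 :: real
  assumes "0 < t1" "0 < t2"
  shows "((t2 * a1 - t1 * a2) / (t1 + t2))\<^sup>2 / (t1 * t2 / (t1 + t2))
    = a1\<^sup>2 / t1 + a2\<^sup>2 / t2 - (a1 + a2)\<^sup>2 / (t1 + t2)"
proof -
  define S where "S = t1 + t2"
  have S: "0 < S"
    using assms unfolding S_def by simp
  have "S * (t2 * a1\<^sup>2 + t1 * a2\<^sup>2) - t1 * t2 * (a1 + a2)\<^sup>2 = (t2 * a1 - t1 * a2)\<^sup>2"
    unfolding S_def by (simp add: power2_eq_square algebra_simps)
  moreover have "((t2 * a1 - t1 * a2) / S)\<^sup>2 / (t1 * t2 / S) = (t2 * a1 - t1 * a2)\<^sup>2 / (S * (t1 * t2))"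
    using S assms by (simp add: field_simps power2_eq_square)
  ultimately have "((t2 * a1 - t1 * a2) / S)\<^sup>2 / (t1 * t2 / S)
      = (S * (t2 * a1\<^sup>2 + t1 * a2\<^sup>2) - t1 * t2 * (a1 + a2)\<^sup>2) / (S * (t1 * t2))"
    by simp
  also have "\<dots> = a1\<^sup>2 / t1 + a2\<^sup>2 / t2 - (a1 + a2)\<^sup>2 / S"
    using S assms by (simp add: field_simps power2_eq_square)
  finally show ?thesis
    unfolding S_def .
qed

lemma interior_face_ineq:
  fixes t1 t2 \<epsilon> \<theta> M j a1 a2 :: real
  assumes t: "0 < t1" "0 < t2" and \<epsilon>: "\<epsilon> \<in> {-1, 0, 1}" and \<theta>: "0 \<le> \<theta>" "\<theta> < 1"
    and M: "1 / (1 - \<theta>) + 1 \<le> M"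
  shows "\<theta> * (t1 * t2 / (t1 + t2) * j\<^sup>2) - M * (a1\<^sup>2 / t1 + a2\<^sup>2 / t2)
     \<le> - (1 + \<epsilon>) * (j * ((t2 * a1 - t1 * a2) / (t1 + t2))) + t1 * t2 / (t1 + t2) * j\<^sup>2
        - \<epsilon> * ((a1 + a2)\<^sup>2 / (t1 + t2))"
proof -
  define S r A m where "S = t1 + t2" and "r = t1 * t2 / S" and "A = a1\<^sup>2 / t1 + a2\<^sup>2 / t2"
    and "m = (t2 * a1 - t1 * a2) / S"
  have S: "0 < S" and r: "0 < r" and A: "0 \<le> A"
    using t unfolding S_def r_def A_def by auto
  have mr: "m\<^sup>2 / r = A - (a1 + a2)\<^sup>2 / S"
    unfolding m_def r_def A_def S_def by (rule weighted_mean_sq_identity[OF t])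
  \<comment> \<open>Young's inequality for the mean and the identity mr for the term of \<epsilon> = 1 each cost
    one multiple of A, whence the condition on M.\<close>
  have "(1 + \<epsilon>) * (j * m) \<le> (1 - \<theta>) * r * j\<^sup>2 + m\<^sup>2 / ((1 - \<theta>) * r)"
    using \<epsilon> \<theta> r by (intro young_ineq) auto
  moreover have "m\<^sup>2 / ((1 - \<theta>) * r) = (1 / (1 - \<theta>)) * (m\<^sup>2 / r)"
    by simp
  moreover have "(1 / (1 - \<theta>)) * (m\<^sup>2 / r) \<le> (1 / (1 - \<theta>)) * A"
    using mr S \<theta> by (intro mult_left_mono) auto
  moreover have "0 \<le> m\<^sup>2 / r" "0 \<le> (a1 + a2)\<^sup>2 / S"
    using r S by simp_all
  then have "- \<epsilon> * ((a1 + a2)\<^sup>2 / S) \<ge> - A"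
    using \<epsilon> A mr by auto
  moreover have "(1 / (1 - \<theta>) + 1) * A \<le> M * A"
    using M A by (rule mult_right_mono)
  ultimately have "\<theta> * (r * j\<^sup>2) - M * A \<le> - (1 + \<epsilon>) * (j * m) + r * j\<^sup>2 - \<epsilon> * ((a1 + a2)\<^sup>2 / S)"
    by (simp add: algebra_simps)
  then show ?thesis
    unfolding S_def r_def A_def m_def .
qed

lemma coercivity_constant_le:
  fixes c :: real
  assumes "0 \<le> c" "c < 1 / 2"
  defines "\<theta> \<equiv> (1 - 2 * c) / 2"
  shows "(1 - 2 * c) / (2 * (1 + 2 * c)) \<le> \<theta>"
    and "(1 - 2 * c) / (2 * (1 + 2 * c)) \<le> 1 - (1 / (1 - \<theta>) + 1) * c"
proof -
  show "(1 - 2 * c) / (2 * (1 + 2 * c)) \<le> \<theta>"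
    unfolding \<theta>_def using assms divide_left_mono[of 1 "1 + 2 * c" "(1 - 2 * c) / 2"] by simp
  have "1 - (1 / (1 - \<theta>) + 1) * c = (1 - 2 * c) * (1 + c) / (1 + 2 * c)"
    unfolding \<theta>_def using assms by (simp add: field_simps)
  moreover have "(1 - 2 * c) * (1 / 2) \<le> (1 - 2 * c) * (1 + c)"
    using assms by (intro mult_left_mono) auto
  then have "(1 - 2 * c) / 2 / (1 + 2 * c) \<le> (1 - 2 * c) * (1 + c) / (1 + 2 * c)"
    using assms by (intro divide_right_mono) auto
  ultimately show "(1 - 2 * c) / (2 * (1 + 2 * c)) \<le> 1 - (1 / (1 - \<theta>) + 1) * c"
    by (simp add: divide_divide_eq_left)
qed

lemma continuous_on_matrix_vector_mult [continuous_intros]: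
  "continuous_on S f \<Longrightarrow> continuous_on S (\<lambda>x. (A :: real^'n::finite^'m::finite) *v f x)"
  by (rule continuous_on_compose2[OF matrix_vector_mult_linear_continuous_on]) auto

section \<open>Coercivity of the UIP bilinear form\<close>

definition elem_energy :: "'n::finite coef \<Rightarrow> 'n dgfun \<Rightarrow> 'n smplx \<Rightarrow> real" where
  "elem_energy K v E = elem_int E (\<lambda>x. grad (v E) x \<bullet> (K E *v grad (v E) x))"

definition flux_penalty ::
    "'n::finite smplx set \<Rightarrow> real \<Rightarrow> real \<Rightarrow> 'n coef \<Rightarrow> 'n dgfun \<Rightarrow> 'n smplx \<Rightarrow> 'n smplx \<Rightarrow> real" where
  "flux_penalty T \<alpha>0 CT K v E F = fint T F (\<lambda>x. (kgrad K v E x \<bullet> nrm E F)\<^sup>2) / tau \<alpha>0 CT K E F"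

definition face_integrand ::
    "real \<Rightarrow> 'n::finite smplx set \<Rightarrow> real \<Rightarrow> real \<Rightarrow> 'n coef \<Rightarrow> 'n dgfun \<Rightarrow> 'n smplx \<Rightarrow> 'n pt \<Rightarrow> real" where
  "face_integrand \<epsilon> T \<alpha>0 CT K v F x =
     - (1 + \<epsilon>) * (wavg T \<alpha>0 CT K (kgrad K v) F x \<bullet> jmp T v F x)
     + rho0 T \<alpha>0 CT K F * (jmp T v F x \<bullet> jmp T v F x)
     - \<epsilon> * (if F \<in> interior_faces T
             then rho1 T \<alpha>0 CT K F * (jmpv T (kgrad K v) F x * jmpv T (kgrad K v) F x) else 0)"

locale uip_discretization = simplicial_mesh \<Omega> T
  for \<Omega> :: "'n::finite pt set" and T +
  fixes K :: "'n coef" and kmin kmax :: real and k :: nat and CT \<alpha>0 :: real and v :: "'n dgfun"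
  assumes coef: "coef_ok T K kmin kmax"
    and trace: "trace_const k T CT"
    and alpha0_pos: "0 < \<alpha>0"
    and v_in_Vh: "v \<in> Vh k T"
begin

lemma poly_deg_v: "E \<in> T \<Longrightarrow> poly_deg k (v E)"
  using v_in_Vh unfolding Vh_def by blast

lemma continuous_on_v: "E \<in> T \<Longrightarrow> continuous_on UNIV (v E)"
  using continuous_on_poly poly_deg_v by blast

lemma continuous_on_grad_v: "E \<in> T \<Longrightarrow> continuous_on UNIV (grad (v E))"
  using continuous_on_grad_poly poly_deg_v by blast

lemma continuous_on_kgrad: "E \<in> T \<Longrightarrow> continuous_on UNIV (kgrad K v E)"
  unfolding kgrad_def[abs_def] using continuous_on_grad_v by (intro continuous_intros)

lemma K_symmetric: "E \<in> T \<Longrightarrow> transpose (K E) = K E"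
  using coef unfolding coef_ok_def by blast

lemma K_coercive: "E \<in> T \<Longrightarrow> kmin * (norm \<xi>)\<^sup>2 \<le> \<xi> \<bullet> (K E *v \<xi>)"
  using coef unfolding coef_ok_def by blast

lemma kmin_pos: "0 < kmin"
  using coef unfolding coef_ok_def by blast

lemma K_nonneg: "E \<in> T \<Longrightarrow> 0 \<le> \<xi> \<bullet> (K E *v \<xi>)"
  using K_coercive[of E \<xi>] kmin_pos by (smt (verit) zero_le_mult_iff zero_le_power2)

lemma kEF_pos:
  assumes "E \<in> T" "F \<in> faces_of E"
  shows "0 < kEF K E F"
proof -
  have "norm (nrm E F) = 1"
    using nrm_spec(1)[OF simplex_of_mesh] assms by blast
  then show ?thesis
    unfolding kEF_def using K_coercive[OF assms(1), of "nrm E F"] kmin_pos by simp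
qed

lemma tau_pos:
  assumes "E \<in> T" "F \<in> faces_of E"
  shows "0 < tau \<alpha>0 CT K E F"
  using kEF_pos[OF assms] hE_pos[OF simplex_of_mesh[OF assms(1)]] alpha0_pos trace
  unfolding tau_def trace_const_def by simp

lemma tau_adj_pos: "F \<in> mesh_faces T \<Longrightarrow> E \<in> adj T F \<Longrightarrow> 0 < tau \<alpha>0 CT K E F"
  using tau_pos adjD by blast

lemma continuous_on_energy_density:
  "E \<in> T \<Longrightarrow> continuous_on UNIV (\<lambda>x. grad (v E) x \<bullet> (K E *v grad (v E) x))"
  using continuous_on_grad_v by (intro continuous_intros)

lemma elem_energy_nonneg: "E \<in> T \<Longrightarrow> 0 \<le> elem_energy K v E"
  unfolding elem_energy_def
  using finite_simplex[OF simplex_of_mesh] continuous_on_energy_density K_nonneg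
  by (intro elem_int_nonneg) auto

text \<open>Discrete trace inequality for the polynomial normal flux, then Cauchy-Schwarz for the form of
  K E; the latter produces exactly the factor kEF of tau, so the contrast of K cancels.\<close>
lemma flux_penalty_le:
  assumes E: "E \<in> T" and F: "F \<in> faces_of E"
  shows "flux_penalty T \<alpha>0 CT K v E F \<le> elem_energy K v E / \<alpha>0"
proof -
  define n where "n = nrm E F"
  define w where "w x = (K E *v grad (v E) x) \<bullet> n" for x
  define Q where "Q x = grad (v E) x \<bullet> (K E *v grad (v E) x)" for x
  have hE: "0 < hE E" and CT: "0 < CT" and kEF: "0 < kEF K E F"
    using hE_pos[OF simplex_of_mesh[OF E]] trace kEF_pos[OF E F] unfolding trace_const_def by auto
  have "(w x)\<^sup>2 \<le> kEF K E F * Q x" for x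
    unfolding w_def Q_def kEF_def n_def
    using K_symmetric[OF E] K_nonneg[OF E] kEF unfolding kEF_def
    by (intro psd_form_cauchy_schwarz) auto
  then have "elem_int E (\<lambda>x. (w x)\<^sup>2) \<le> elem_int E (\<lambda>x. kEF K E F * Q x)"
    unfolding w_def Q_def
    using finite_simplex[OF simplex_of_mesh[OF E]] continuous_on_grad_v[OF E]
    by (intro elem_int_mono continuous_intros) auto
  then have bulk: "elem_int E (\<lambda>x. (w x)\<^sup>2) \<le> kEF K E F * elem_energy K v E"
    unfolding elem_int_cmult elem_energy_def Q_def .
  have "fint T F (\<lambda>x. (w x)\<^sup>2) = face_int F n (\<lambda>x. (w x)\<^sup>2)"
    unfolding n_def by (rule fint_eq_face_int[OF E F])
  also have "\<dots> \<le> CT\<^sup>2 / hE E * elem_int E (\<lambda>x. (w x)\<^sup>2)"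
    using trace E F poly_deg_flux[OF poly_deg_v[OF E]]
    unfolding trace_const_def w_def n_def by blast
  also have "\<dots> \<le> CT\<^sup>2 / hE E * (kEF K E F * elem_energy K v E)"
    using bulk hE by (intro mult_left_mono) auto
  finally have "fint T F (\<lambda>x. (w x)\<^sup>2) / tau \<alpha>0 CT K E F
      \<le> CT\<^sup>2 / hE E * (kEF K E F * elem_energy K v E) / tau \<alpha>0 CT K E F"
    using tau_pos[OF E F] by (intro divide_right_mono) auto
  also have "\<dots> = elem_energy K v E / \<alpha>0"
    unfolding tau_def using alpha0_pos CT hE kEF by (simp add: field_simps)
  finally show ?thesis
    unfolding flux_penalty_def kgrad_def w_def n_def by simp
qed

lemma continuous_on_jmp: "continuous_on UNIV (jmp T v F)"
  unfolding jmp_def[abs_def] using continuous_on_v in_mesh_of_adj by (intro continuous_intros) auto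

lemma continuous_on_jmpv: "continuous_on UNIV (jmpv T (kgrad K v) F)"
  unfolding jmpv_def[abs_def] using continuous_on_kgrad in_mesh_of_adj by (intro continuous_intros) auto

lemma continuous_on_wavg: "continuous_on UNIV (wavg T \<alpha>0 CT K (kgrad K v) F)"
proof (cases "F \<in> boundary_faces T")
  case True
  then obtain E where "adj T F = {E}"
    unfolding boundary_faces_def by (auto simp: card_1_singleton_iff)
  moreover from this have "E \<in> T"
    using in_mesh_of_adj by blast
  ultimately show ?thesis
    unfolding wavg_def[abs_def] using True continuous_on_kgrad by simp
next
  case False
  then show ?thesis
    unfolding wavg_def[abs_def] using continuous_on_kgrad in_mesh_of_adj by (simp add: continuous_intros)
qed

lemma boundary_face_pointwise:
  assumes F: "F \<in> mesh_faces T" and adj: "adj T F = {E}"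
    and Fb: "F \<in> boundary_faces T" "F \<notin> interior_faces T"
    and \<epsilon>: "\<epsilon> \<in> {-1, 0, 1}" and \<theta>: "0 \<le> \<theta>" "\<theta> < 1" and M: "1 / (1 - \<theta>) \<le> M"
  shows "\<theta> * (rho0 T \<alpha>0 CT K F * (jmp T v F x \<bullet> jmp T v F x))
      - M * (\<Sum>E\<in>adj T F. (kgrad K v E x \<bullet> nrm E F)\<^sup>2 / tau \<alpha>0 CT K E F)
    \<le> face_integrand \<epsilon> T \<alpha>0 CT K v F x"
proof -
  define n a t where "n = nrm E F" and "a = kgrad K v E x \<bullet> n" and "t = tau \<alpha>0 CT K E F"
  have E: "E \<in> adj T F"
    using adj by simp
  have "n \<bullet> n = 1"
    using nrm_spec(1)[OF simplex_of_mesh] adjD[OF F E] unfolding n_def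
    by (simp add: power2_norm_eq_inner[symmetric])
  then have jj: "jmp T v F x \<bullet> jmp T v F x = (v E x)\<^sup>2"
    unfolding jmp_def adj n_def by (simp add: power2_eq_square)
  have "(THE E'. E' \<in> adj T F) = E"
    unfolding adj by simp
  then have "rho0 T \<alpha>0 CT K F = t" "wavg T \<alpha>0 CT K (kgrad K v) F x \<bullet> jmp T v F x = v E x * a"
    unfolding rho0_def wavg_def jmp_def t_def a_def n_def using Fb adj by auto
  moreover have "\<theta> * (t * (v E x)\<^sup>2) - M * (a\<^sup>2 / t) \<le> - (1 + \<epsilon>) * (v E x * a) + t * (v E x)\<^sup>2"
    unfolding t_def using tau_adj_pos[OF F E] \<epsilon> \<theta> M by (intro boundary_face_ineq) auto
  ultimately show ?thesis
    unfolding face_integrand_def jj adj a_def n_def t_def using Fb by simp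
qed

lemma interior_face_pointwise:
  assumes F: "F \<in> mesh_faces T" and adj: "adj T F = {E1, E2}" "E1 \<noteq> E2"
    and n2: "nrm E2 F = - nrm E1 F" and Fi: "F \<in> interior_faces T" "F \<notin> boundary_faces T"
    and \<epsilon>: "\<epsilon> \<in> {-1, 0, 1}" and \<theta>: "0 \<le> \<theta>" "\<theta> < 1" and M: "1 / (1 - \<theta>) + 1 \<le> M"
  shows "\<theta> * (rho0 T \<alpha>0 CT K F * (jmp T v F x \<bullet> jmp T v F x))
      - M * (\<Sum>E\<in>adj T F. (kgrad K v E x \<bullet> nrm E F)\<^sup>2 / tau \<alpha>0 CT K E F)
    \<le> face_integrand \<epsilon> T \<alpha>0 CT K v F x"
proof -
  define n t1 t2 a1 a2 j where "n = nrm E1 F" and "t1 = tau \<alpha>0 CT K E1 F"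
    and "t2 = tau \<alpha>0 CT K E2 F" and "a1 = kgrad K v E1 x \<bullet> n" and "a2 = kgrad K v E2 x \<bullet> - n"
    and "j = v E1 x - v E2 x"
  have E: "E1 \<in> adj T F" "E2 \<in> adj T F"
    using adj by auto
  have t: "0 < t1" "0 < t2"
    unfolding t1_def t2_def using tau_adj_pos[OF F] E by auto
  have "n \<bullet> n = 1"
    using nrm_spec(1)[OF simplex_of_mesh] adjD[OF F E(1)] unfolding n_def
    by (simp add: power2_norm_eq_inner[symmetric])
  have tauS: "tauS T \<alpha>0 CT K F = t1 + t2"
    unfolding tauS_def adj t1_def t2_def using adj(2) by simp
  have jmp: "jmp T v F x = j *\<^sub>R n"
    unfolding jmp_def adj j_def n_def using adj(2) n2 by (simp add: algebra_simps)
  have "rho0 T \<alpha>0 CT K F = t1 * t2 / (t1 + t2)"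
    unfolding rho0_def tauS using Fi adj by (simp add: t1_def t2_def)
  moreover have "rho1 T \<alpha>0 CT K F = 1 / (t1 + t2)"
    unfolding rho1_def tauS ..
  moreover have "jmp T v F x \<bullet> jmp T v F x = j\<^sup>2"
    unfolding jmp using \<open>n \<bullet> n = 1\<close> by (simp add: power2_eq_square)
  moreover have "wavg T \<alpha>0 CT K (kgrad K v) F x \<bullet> jmp T v F x = j * ((t2 * a1 - t1 * a2) / (t1 + t2))"
    unfolding wavg_def jmp tauS using Fi adj t
    by (simp add: t1_def t2_def a1_def a2_def inner_add_left add_divide_distrib algebra_simps)
  moreover have "jmpv T (kgrad K v) F x = a1 + a2"
    unfolding jmpv_def adj a1_def a2_def n_def using adj(2) n2 by simp
  moreover have "(\<Sum>E\<in>adj T F. (kgrad K v E x \<bullet> nrm E F)\<^sup>2 / tau \<alpha>0 CT K E F) = a1\<^sup>2 / t1 + a2\<^sup>2 / t2"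
    unfolding adj a1_def a2_def t1_def t2_def n_def using adj(2) n2 by simp
  moreover have "\<theta> * (t1 * t2 / (t1 + t2) * j\<^sup>2) - M * (a1\<^sup>2 / t1 + a2\<^sup>2 / t2)
     \<le> - (1 + \<epsilon>) * (j * ((t2 * a1 - t1 * a2) / (t1 + t2))) + t1 * t2 / (t1 + t2) * j\<^sup>2
        - \<epsilon> * ((a1 + a2)\<^sup>2 / (t1 + t2))"
    using t \<epsilon> \<theta> M by (rule interior_face_ineq)
  ultimately show ?thesis
    unfolding face_integrand_def using Fi by (simp add: power2_eq_square)
qed

lemma face_integrand_lower_bound:
  assumes F: "F \<in> mesh_faces T"
    and \<epsilon>: "\<epsilon> \<in> {-1, 0, 1}" and \<theta>: "0 \<le> \<theta>" "\<theta> < 1" and M: "1 / (1 - \<theta>) + 1 \<le> M"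
  shows "\<theta> * (rho0 T \<alpha>0 CT K F * (jmp T v F x \<bullet> jmp T v F x))
      - M * (\<Sum>E\<in>adj T F. (kgrad K v E x \<bullet> nrm E F)\<^sup>2 / tau \<alpha>0 CT K E F)
    \<le> face_integrand \<epsilon> T \<alpha>0 CT K v F x"
  using F
proof (cases rule: mesh_face_cases)
  case (boundary E)
  moreover have "1 / (1 - \<theta>) \<le> M"
    using M by simp
  ultimately show ?thesis
    using F \<epsilon> \<theta> by (intro boundary_face_pointwise)
next
  case (interior E E')
  then show ?thesis
    using F \<epsilon> \<theta> M by (intro interior_face_pointwise)
qed

lemma continuous_on_face_integrand: "continuous_on UNIV (face_integrand \<epsilon> T \<alpha>0 CT K v F)"
  unfolding face_integrand_def[abs_def]
  using continuous_on_wavg continuous_on_jmp continuous_on_jmpv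
  by (cases "F \<in> interior_faces T") (auto intro!: continuous_intros)

lemma fint_face_integrand:
  assumes F: "F \<in> mesh_faces T"
  shows "fint T F (face_integrand \<epsilon> T \<alpha>0 CT K v F)
    = - (1 + \<epsilon>) * fint T F (\<lambda>x. wavg T \<alpha>0 CT K (kgrad K v) F x \<bullet> jmp T v F x)
      + fint T F (\<lambda>x. rho0 T \<alpha>0 CT K F * (jmp T v F x \<bullet> jmp T v F x))
      - \<epsilon> * (if F \<in> interior_faces T then fint T F (\<lambda>x. rho1 T \<alpha>0 CT K F *
             (jmpv T (kgrad K v) F x * jmpv T (kgrad K v) F x)) else 0)"
proof -
  define f1 f2 f3 where "f1 x = wavg T \<alpha>0 CT K (kgrad K v) F x \<bullet> jmp T v F x"
    and "f2 x = rho0 T \<alpha>0 CT K F * (jmp T v F x \<bullet> jmp T v F x)"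
    and "f3 x = (if F \<in> interior_faces T
                 then rho1 T \<alpha>0 CT K F * (jmpv T (kgrad K v) F x * jmpv T (kgrad K v) F x) else 0)"
    for x
  obtain E where "E \<in> T" "F \<in> faces_of E"
    using F unfolding mesh_faces_def by blast
  then have "finite F"
    using finite_face simplex_of_mesh by blast
  moreover have "continuous_on UNIV f1" "continuous_on UNIV f2"
    unfolding f1_def[abs_def] f2_def[abs_def] using continuous_on_wavg continuous_on_jmp
    by (auto intro!: continuous_intros)
  moreover have "continuous_on UNIV f3"
    unfolding f3_def[abs_def] using continuous_on_jmpv
    by (cases "F \<in> interior_faces T") (auto intro!: continuous_intros)
  ultimately have "fint T F (\<lambda>x. (- (1 + \<epsilon>)) * f1 x + 1 * f2 x + (- \<epsilon>) * f3 x)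
      = (- (1 + \<epsilon>)) * fint T F f1 + 1 * fint T F f2 + (- \<epsilon>) * fint T F f3"
    unfolding fint_def by (rule face_int_lincomb3)
  moreover have "fint T F f3 = (if F \<in> interior_faces T then fint T F (\<lambda>x. rho1 T \<alpha>0 CT K F *
             (jmpv T (kgrad K v) F x * jmpv T (kgrad K v) F x)) else 0)"
    unfolding f3_def fint_def face_int_prism by simp
  ultimately show ?thesis
    unfolding face_integrand_def f1_def f2_def f3_def by simp
qed

lemma rho0_nonneg:
  assumes F: "F \<in> mesh_faces T"
  shows "0 \<le> rho0 T \<alpha>0 CT K F"
  using F
proof (cases rule: mesh_face_cases)
  case (boundary E)
  then show ?thesis
    unfolding rho0_def using tau_adj_pos[OF F, of E] by simp
next
  case interior
  have "0 \<le> (\<Prod>E\<in>adj T F. tau \<alpha>0 CT K E F)" "0 \<le> tauS T \<alpha>0 CT K F"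
    unfolding tauS_def using tau_adj_pos[OF F] by (simp_all add: prod_nonneg sum_nonneg less_imp_le)
  then show ?thesis
    unfolding rho0_def using interior by simp
qed

lemma seminorm0_sq_nonneg: "0 \<le> seminorm0_sq T \<alpha>0 CT K v"
  unfolding seminorm0_sq_def fint_def
proof (intro sum_nonneg face_int_nonneg)
  fix F
  assume F: "F \<in> mesh_faces T"
  then obtain E where "E \<in> T" "F \<in> faces_of E"
    unfolding mesh_faces_def by blast
  then show "finite F"
    using finite_face simplex_of_mesh by blast
  show "continuous_on UNIV (\<lambda>x. rho0 T \<alpha>0 CT K F * (norm (jmp T v F x))\<^sup>2)"
    using continuous_on_jmp by (intro continuous_intros)
  show "0 \<le> rho0 T \<alpha>0 CT K F * (norm (jmp T v F x))\<^sup>2" for x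
    using rho0_nonneg[OF F] by simp
qed

lemma a_h_diag:
  "a_h \<epsilon> T \<alpha>0 CT K v v
    = (\<Sum>E\<in>T. elem_energy K v E) + (\<Sum>F\<in>mesh_faces T. fint T F (face_integrand \<epsilon> T \<alpha>0 CT K v F))"
proof -
  define f1 f2 f3 where "f1 F = fint T F (\<lambda>x. wavg T \<alpha>0 CT K (kgrad K v) F x \<bullet> jmp T v F x)"
    and "f2 F = fint T F (\<lambda>x. rho0 T \<alpha>0 CT K F * (jmp T v F x \<bullet> jmp T v F x))"
    and "f3 F = fint T F (\<lambda>x. rho1 T \<alpha>0 CT K F * (jmpv T (kgrad K v) F x * jmpv T (kgrad K v) F x))"
    for F
  have "(\<Sum>F\<in>interior_faces T. f3 F) = (\<Sum>F\<in>mesh_faces T. if card (adj T F) = 2 then f3 F else 0)"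
    unfolding interior_faces_def by (rule sum.inter_filter[OF finite_mesh_faces])
  also have "\<dots> = (\<Sum>F\<in>mesh_faces T. if F \<in> interior_faces T then f3 F else 0)"
    by (rule sum.cong) (auto simp: interior_faces_def)
  finally have interior: "(\<Sum>F\<in>interior_faces T. f3 F)
      = (\<Sum>F\<in>mesh_faces T. if F \<in> interior_faces T then f3 F else 0)" .
  have "(\<Sum>F\<in>mesh_faces T. fint T F (face_integrand \<epsilon> T \<alpha>0 CT K v F))
      = (\<Sum>F\<in>mesh_faces T. - (1 + \<epsilon>) * f1 F + f2 F - \<epsilon> * (if F \<in> interior_faces T then f3 F else 0))"
    unfolding f1_def f2_def f3_def by (rule sum.cong[OF refl fint_face_integrand])
  also have "\<dots> = - (1 + \<epsilon>) * (\<Sum>F\<in>mesh_faces T. f1 F) + (\<Sum>F\<in>mesh_faces T. f2 F)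
      - \<epsilon> * (\<Sum>F\<in>interior_faces T. f3 F)"
    unfolding interior by (simp add: sum.distrib sum_subtractf sum_distrib_left)
  finally show ?thesis
    unfolding a_h_def a_vol_def a_c_def s_h_def elem_energy_def kgrad_def f1_def f2_def f3_def
    by (simp add: inner_commute algebra_simps)
qed

lemma fint_face_integrand_lower_bound:
  assumes F: "F \<in> mesh_faces T"
    and \<epsilon>: "\<epsilon> \<in> {-1, 0, 1}" and \<theta>: "0 \<le> \<theta>" "\<theta> < 1" and M: "1 / (1 - \<theta>) + 1 \<le> M"
  shows "\<theta> * fint T F (\<lambda>x. rho0 T \<alpha>0 CT K F * (norm (jmp T v F x))\<^sup>2)
      - M * (\<Sum>E\<in>adj T F. flux_penalty T \<alpha>0 CT K v E F)
    \<le> fint T F (face_integrand \<epsilon> T \<alpha>0 CT K v F)"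
proof -
  define f R where "f x = rho0 T \<alpha>0 CT K F * (norm (jmp T v F x))\<^sup>2"
    and "R x = (\<Sum>E\<in>adj T F. (1 / tau \<alpha>0 CT K E F) * (kgrad K v E x \<bullet> nrm E F)\<^sup>2)" for x
  obtain E where "E \<in> T" "F \<in> faces_of E"
    using F unfolding mesh_faces_def by blast
  then have fF: "finite F"
    using finite_face simplex_of_mesh by blast
  have cf: "continuous_on UNIV f"
    unfolding f_def[abs_def] using continuous_on_jmp by (intro continuous_intros)
  have cR: "continuous_on UNIV (\<lambda>x. (1 / tau \<alpha>0 CT K E F) * (kgrad K v E x \<bullet> nrm E F)\<^sup>2)"
    if "E \<in> adj T F" for E
    using continuous_on_kgrad[OF in_mesh_of_adj[OF that]] by (intro continuous_intros)
  then have "continuous_on UNIV R"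
    unfolding R_def[abs_def] by (intro continuous_on_sum) auto
  moreover have "\<theta> * f x + (- M) * R x \<le> face_integrand \<epsilon> T \<alpha>0 CT K v F x" for x
    using face_integrand_lower_bound[OF F \<epsilon> \<theta> M, of x]
    unfolding f_def R_def by (simp add: power2_norm_eq_inner)
  ultimately have "fint T F (\<lambda>x. \<theta> * f x + (- M) * R x) \<le> fint T F (face_integrand \<epsilon> T \<alpha>0 CT K v F)"
    unfolding fint_def using fF cf continuous_on_face_integrand
    by (intro face_int_mono continuous_intros)
  moreover have "fint T F (\<lambda>x. \<theta> * f x + (- M) * R x) = \<theta> * fint T F f + (- M) * fint T F R"
    unfolding fint_def using fF cf \<open>continuous_on UNIV R\<close> by (rule face_int_lincomb2)
  moreover have "fint T F R
      = (\<Sum>E\<in>adj T F. fint T F (\<lambda>x. (1 / tau \<alpha>0 CT K E F) * (kgrad K v E x \<bullet> nrm E F)\<^sup>2))"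
    unfolding R_def fint_def using fF finite_adj cR by (rule face_int_sum)
  moreover have "\<dots> = (\<Sum>E\<in>adj T F. flux_penalty T \<alpha>0 CT K v E F)"
    unfolding flux_penalty_def fint_def face_int_cmult by simp
  ultimately show ?thesis
    unfolding f_def by simp
qed

lemma a_h_lower_bound:
  assumes \<epsilon>: "\<epsilon> \<in> {-1, 0, 1}" and \<theta>: "0 \<le> \<theta>" "\<theta> < 1" and M: "1 / (1 - \<theta>) + 1 \<le> M"
  shows "(1 - M * (real (eta0 T) / \<alpha>0)) * (\<Sum>E\<in>T. elem_energy K v E) + \<theta> * seminorm0_sq T \<alpha>0 CT K v
    \<le> a_h \<epsilon> T \<alpha>0 CT K v v"
proof -
  define P Q where "P E F = flux_penalty T \<alpha>0 CT K v E F" and "Q F = (\<Sum>E\<in>adj T F. P E F)" for E F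
  have "0 \<le> 1 / (1 - \<theta>)"
    using \<theta> by simp
  then have "0 \<le> M"
    using M by linarith
  have "(\<Sum>F\<in>mesh_faces T. \<Sum>E\<in>adj T F. P E F) = (\<Sum>E\<in>T. \<Sum>F\<in>faces_of E. P E F)"
    by (rule sum_mesh_faces_adj)
  also have "\<dots> \<le> (\<Sum>E\<in>T. real (card (faces_of E)) * (elem_energy K v E / \<alpha>0))"
    unfolding P_def using flux_penalty_le by (intro sum_mono sum_bounded_above) auto
  also have "\<dots> \<le> (\<Sum>E\<in>T. real (eta0 T) * (elem_energy K v E / \<alpha>0))"
    unfolding eta0_def using finite_mesh elem_energy_nonneg alpha0_pos
    by (intro sum_mono mult_right_mono) auto
  also have "\<dots> = real (eta0 T) / \<alpha>0 * (\<Sum>E\<in>T. elem_energy K v E)"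
    by (simp add: sum_distrib_left)
  finally have "M * (\<Sum>F\<in>mesh_faces T. Q F)
      \<le> M * (real (eta0 T) / \<alpha>0 * (\<Sum>E\<in>T. elem_energy K v E))"
    unfolding Q_def using \<open>0 \<le> M\<close> by (rule mult_left_mono)
  moreover have "\<theta> * seminorm0_sq T \<alpha>0 CT K v - M * (\<Sum>F\<in>mesh_faces T. Q F)
      \<le> (\<Sum>F\<in>mesh_faces T. fint T F (face_integrand \<epsilon> T \<alpha>0 CT K v F))"
    unfolding seminorm0_sq_def sum_distrib_left sum_subtractf[symmetric]
    using fint_face_integrand_lower_bound[OF _ \<epsilon> \<theta> M] unfolding Q_def P_def by (intro sum_mono) auto
  ultimately show ?thesis
    unfolding a_h_diag by (simp add: algebra_simps)
qed

lemma uip_coercive: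
  assumes \<epsilon>: "\<epsilon> \<in> {-1, 0, 1}" and c: "real (eta0 T) / \<alpha>0 < 1 / 2"
  defines "c \<equiv> real (eta0 T) / \<alpha>0"
  shows "(1 - 2 * c) / (2 * (1 + 2 * c)) * tnorm_sq T \<alpha>0 CT K v \<le> a_h \<epsilon> T \<alpha>0 CT K v v"
proof -
  define \<theta> C vol sn where "\<theta> = (1 - 2 * c) / 2" and "C = (1 - 2 * c) / (2 * (1 + 2 * c))"
    and "vol = (\<Sum>E\<in>T. elem_energy K v E)" and "sn = seminorm0_sq T \<alpha>0 CT K v"
  have c0: "0 \<le> c" and c1: "c < 1 / 2"
    using alpha0_pos c unfolding c_def by auto
  have \<theta>: "0 \<le> \<theta>" "\<theta> < 1"
    unfolding \<theta>_def using c0 c1 by auto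
  have "C * vol \<le> (1 - (1 / (1 - \<theta>) + 1) * c) * vol"
    unfolding C_def \<theta>_def vol_def using coercivity_constant_le(2)[OF c0 c1] elem_energy_nonneg
    by (intro mult_right_mono sum_nonneg) auto
  moreover have "C * sn \<le> \<theta> * sn"
    unfolding C_def \<theta>_def sn_def using coercivity_constant_le(1)[OF c0 c1] seminorm0_sq_nonneg
    by (rule mult_right_mono)
  ultimately have "C * (vol + sn) \<le> (1 - (1 / (1 - \<theta>) + 1) * c) * vol + \<theta> * sn"
    unfolding distrib_left by linarith
  also have "\<dots> \<le> a_h \<epsilon> T \<alpha>0 CT K v v"
    using a_h_lower_bound[OF \<epsilon> \<theta> order_refl] unfolding vol_def sn_def c_def by simp
  finally show ?thesis
    unfolding tnorm_sq_def C_def vol_def sn_def elem_energy_def .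
qed

end

theorem mainTheorem8:
  fixes C0 :: real
  assumes "CARD('n::finite) \<in> {2, 3}"
    and "0 < C0" and "C0\<^sup>2 < 1/2"
  shows "\<exists>Csta>0. \<forall>(\<Omega> :: 'n pt set) (T :: 'n smplx set) (K :: 'n coef) kmin kmax
            (k :: nat) CT \<alpha>0 (\<epsilon> :: real) (vh :: 'n dgfun).
     lipschitz_domain \<Omega> \<longrightarrow> conforming_mesh T \<Omega> \<longrightarrow> hmax T \<le> 1 \<longrightarrow>
     coef_ok T K kmin kmax \<longrightarrow> k \<ge> 1 \<longrightarrow> trace_const k T CT \<longrightarrow>
     0 < \<alpha>0 \<longrightarrow> C0 = sqrt (real (eta0 T) / \<alpha>0) \<longrightarrow>
     \<epsilon> \<in> {-1, 0, 1} \<longrightarrow> vh \<in> Vh k T \<longrightarrow>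
     a_h \<epsilon> T \<alpha>0 CT K vh vh \<ge> Csta * tnorm_sq T \<alpha>0 CT K vh"
proof -
  define c where "c = C0\<^sup>2"
  have c: "0 < c" "c < 1 / 2"
    unfolding c_def using assms(2,3) by auto
  show ?thesis
  proof (intro exI[of _ "(1 - 2 * c) / (2 * (1 + 2 * c))"] conjI allI impI)
    show "0 < (1 - 2 * c) / (2 * (1 + 2 * c))"
      using c by simp
    fix \<Omega> :: "'n pt set" and T :: "'n smplx set" and K :: "'n coef" and kmin kmax :: real
      and k :: nat and CT \<alpha>0 \<epsilon> :: real and vh :: "'n dgfun"
    assume "lipschitz_domain \<Omega>" "conforming_mesh T \<Omega>" "hmax T \<le> 1" "coef_ok T K kmin kmax"
      "k \<ge> 1" "trace_const k T CT" "0 < \<alpha>0" "C0 = sqrt (real (eta0 T) / \<alpha>0)"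
      "\<epsilon> \<in> {-1, 0, 1}" "vh \<in> Vh k T"
    then interpret uip_discretization \<Omega> T K kmin kmax k CT \<alpha>0 vh
      by unfold_locales
    have "real (eta0 T) / \<alpha>0 = c"
      unfolding c_def \<open>C0 = _\<close> using \<open>0 < \<alpha>0\<close> by simp
    then show "(1 - 2 * c) / (2 * (1 + 2 * c)) * tnorm_sq T \<alpha>0 CT K vh \<le> a_h \<epsilon> T \<alpha>0 CT K vh vh"
      using uip_coercive[OF \<open>\<epsilon> \<in> _\<close>] c by simp
  qed
qed

end
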